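(* Let $F$ be a nondyadic nonarchimedean local field with uniformizer $\pi$, maximal ideal $\mathfrak p$ and residue field $\mathfrak k$, and $A$ a quaternion $F$-algebra. Put $\varepsilon=0$ if $A$ is split, and if $A$ is ramified let $\varepsilon\in O_F^\times$ be such that $1-4\varepsilon\in O_F^\times\setminus O_F^{\times2}$. Let $\{1,x_1,x_2,x_3\}$ be an $F$-basis of $A$ with $x_1^2=x_1-\varepsilon$, $x_2^2=\pi$, $x_2x_1=(1-x_1)x_2$, $x_3=x_1x_2$. Let $n\ge3$, $r=\lfloor n/2\rfloor$, $s=\lfloor (n-1)/2\rfloor$, $\alpha\in\mathfrak p$, $\beta\in O_F$ (with $1+\beta\in O_F^\times$ if $A$ is split), $x_{\alpha\beta}=\alpha x_1+x_2+\beta x_3$, and $\mathcal O=O_F+O_Fx_{\alpha\beta}+O_F\pi^rx_1+O_F\pi^sx_3$ (a Bass order with Eichler invariant $0$ and $n(\mathcal O)=n$). Put $M=F(x_{\alpha\beta})$. Then $\mathrm{Nr}(\mathcal N(\mathcal O))=\mathrm{Nm}_{M/F}(M^\times)$ if and only if either (i) $A$ is split and $-1\in\mathfrak k^{\times2}$, or (ii) $A$ is ramified and $-1\notin\mathfrak k^{\times2}$.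
   Context: $\mathcal N(\mathcal O)$ is the normalizer of $\mathcal O$ in $A^\times$, $\mathrm{Nr}$ the reduced norm, $\mathrm{Nm}_{M/F}$ the field norm. Nondyadic means residue characteristic $\ne2$. *)

theory Defs
  imports Main
begin

text \<open>A discrete valuation v on a field; v is only meaningful on nonzero elements.\<close>

definition dval :: "('a::field \<Rightarrow> int) \<Rightarrow> bool" where
  "dval v \<longleftrightarrow>
     (\<forall>x y. x \<noteq> 0 \<longrightarrow> y \<noteq> 0 \<longrightarrow> v (x * y) = v x + v y) \<and>
     (\<forall>x y. x \<noteq> 0 \<longrightarrow> y \<noteq> 0 \<longrightarrow> x + y \<noteq> 0 \<longrightarrow> min (v x) (v y) \<le> v (x + y)) \<and>
     (\<exists>t. t \<noteq> 0 \<and> v t = 1)"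

definition vclose :: "('a::field \<Rightarrow> int) \<Rightarrow> int \<Rightarrow> 'a \<Rightarrow> 'a \<Rightarrow> bool" where
  "vclose v k x y \<longleftrightarrow> x = y \<or> k \<le> v (x - y)"

definition vcomplete :: "('a::field \<Rightarrow> int) \<Rightarrow> bool" where
  "vcomplete v \<longleftrightarrow>
     (\<forall>f :: nat \<Rightarrow> 'a. (\<forall>k. \<exists>N. \<forall>m\<ge>N. \<forall>n\<ge>N. vclose v k (f m) (f n)) \<longrightarrow>
        (\<exists>L. \<forall>k. \<exists>N. \<forall>n\<ge>N. vclose v k (f n) L))"

definition OF :: "('a::field \<Rightarrow> int) \<Rightarrow> 'a set" where
  "OF v = {x. x = 0 \<or> 0 \<le> v x}"

definition pid :: "('a::field \<Rightarrow> int) \<Rightarrow> 'a set" where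
  "pid v = {x. x = 0 \<or> 0 < v x}"

definition OFunits :: "('a::field \<Rightarrow> int) \<Rightarrow> 'a set" where
  "OFunits v = {x. x \<noteq> 0 \<and> v x = 0}"

definition finite_residue :: "('a::field \<Rightarrow> int) \<Rightarrow> bool" where
  "finite_residue v \<longleftrightarrow>
     (\<exists>S. finite S \<and> S \<subseteq> OF v \<and> (\<forall>x\<in>OF v. \<exists>s\<in>S. x - s \<in> pid v))"

definition nonarch_local_field :: "('a::field \<Rightarrow> int) \<Rightarrow> bool" where
  "nonarch_local_field v \<longleftrightarrow> dval v \<and> vcomplete v \<and> finite_residue v"

text \<open>Nondyadic: residue characteristic different from 2, i.e. 2 is a unit of O_F.\<close>
definition nondyadic :: "('a::field \<Rightarrow> int) \<Rightarrow> bool" where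
  "nondyadic v \<longleftrightarrow> (2::'a) \<in> OFunits v"

definition uniformizer :: "('a::field \<Rightarrow> int) \<Rightarrow> 'a \<Rightarrow> bool" where
  "uniformizer v t \<longleftrightarrow> t \<noteq> 0 \<and> v t = 1"

text \<open>The image of a in k is a nonzero square in k (a in O_F).\<close>
definition residue_unit_square :: "('a::field \<Rightarrow> int) \<Rightarrow> 'a \<Rightarrow> bool" where
  "residue_unit_square v a \<longleftrightarrow> (\<exists>u\<in>OFunits v. u * u - a \<in> pid v)"

text \<open>Q a0 a1 a2 a3 stands for a0 + a1 x1 + a2 x2 + a3 x3, where
  x1^2 = x1 - e, x2^2 = p, x2 x1 = (1 - x1) x2, x3 = x1 x2.
  Writing elements as z + w x2 with z, w in K = F[x1], the multiplication is
  (z + w x2)(z' + w' x2) = (z z' + p w sigma(w')) + (z w' + w sigma(z')) x2.\<close>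

datatype 'a quat = Q 'a 'a 'a 'a

fun qc0 :: "'a quat \<Rightarrow> 'a" where "qc0 (Q a b c d) = a"

definition kmul :: "'a::field \<Rightarrow> 'a \<times> 'a \<Rightarrow> 'a \<times> 'a \<Rightarrow> 'a \<times> 'a" where
  "kmul e c d = (fst c * fst d - e * snd c * snd d,
                 fst c * snd d + snd c * fst d + snd c * snd d)"

definition ksig :: "'a::field \<times> 'a \<Rightarrow> 'a \<times> 'a" where
  "ksig d = (fst d + snd d, - snd d)"

definition kadd :: "'a::field \<times> 'a \<Rightarrow> 'a \<times> 'a \<Rightarrow> 'a \<times> 'a" where
  "kadd c d = (fst c + fst d, snd c + snd d)"

definition kscal :: "'a::field \<Rightarrow> 'a \<times> 'a \<Rightarrow> 'a \<times> 'a" where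
  "kscal a d = (a * fst d, a * snd d)"

fun qmul :: "'a::field \<Rightarrow> 'a \<Rightarrow> 'a quat \<Rightarrow> 'a quat \<Rightarrow> 'a quat" where
  "qmul e p (Q a0 a1 a2 a3) (Q b0 b1 b2 b3) =
     (let z = (a0, a1); w = (a2, a3); z' = (b0, b1); w' = (b2, b3);
          u = kadd (kmul e z z') (kscal p (kmul e w (ksig w')));
          t = kadd (kmul e z w') (kmul e w (ksig z'))
      in Q (fst u) (snd u) (fst t) (snd t))"

fun qadd :: "'a::field quat \<Rightarrow> 'a quat \<Rightarrow> 'a quat" where
  "qadd (Q a0 a1 a2 a3) (Q b0 b1 b2 b3) = Q (a0 + b0) (a1 + b1) (a2 + b2) (a3 + b3)"

fun qscal :: "'a::field \<Rightarrow> 'a quat \<Rightarrow> 'a quat" where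
  "qscal c (Q a0 a1 a2 a3) = Q (c * a0) (c * a1) (c * a2) (c * a3)"

definition qzero :: "'a::field quat" where "qzero = Q 0 0 0 0"
definition qone :: "'a::field quat" where "qone = Q 1 0 0 0"
definition qx1 :: "'a::field quat" where "qx1 = Q 0 1 0 0"
definition qx2 :: "'a::field quat" where "qx2 = Q 0 0 1 0"
definition qx3 :: "'a::field quat" where "qx3 = Q 0 0 0 1"

text \<open>Standard (canonical) involution: conj(z + w x2) = sigma(z) - w x2.\<close>
fun qconj :: "'a::field quat \<Rightarrow> 'a quat" where
  "qconj (Q a0 a1 a2 a3) = Q (a0 + a1) (- a1) (- a2) (- a3)"

definition nrd :: "'a::field \<Rightarrow> 'a \<Rightarrow> 'a quat \<Rightarrow> 'a" where
  "nrd e p a = qc0 (qmul e p a (qconj a))"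

text \<open>A is ramified iff it is a division algebra; split otherwise (then A = M_2(F)).\<close>
definition quat_division :: "'a::field \<Rightarrow> 'a \<Rightarrow> bool" where
  "quat_division e p \<longleftrightarrow>
     (\<forall>a. a \<noteq> qzero \<longrightarrow> (\<exists>b. qmul e p a b = qone \<and> qmul e p b a = qone))"

definition quat_split :: "'a::field \<Rightarrow> 'a \<Rightarrow> bool" where
  "quat_split e p \<longleftrightarrow> \<not> quat_division e p"

definition normalizer :: "'a::field \<Rightarrow> 'a \<Rightarrow> 'a quat set \<Rightarrow> 'a quat set" where
  "normalizer e p Ord = {g. \<exists>h. qmul e p g h = qone \<and> qmul e p h g = qone \<and>
                           (\<lambda>y. qmul e p (qmul e p g y) h) ` Ord = Ord}"

definition xab :: "'a::field \<Rightarrow> 'a \<Rightarrow> 'a quat" where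
  "xab a b = qadd (qscal a qx1) (qadd qx2 (qscal b qx3))"

definition bass_order ::
  "('a::field \<Rightarrow> int) \<Rightarrow> 'a \<Rightarrow> 'a \<Rightarrow> 'a \<Rightarrow> nat \<Rightarrow> 'a quat set" where
  "bass_order v p a b n =
     {qadd (qscal c0 qone) (qadd (qscal c1 (xab a b))
        (qadd (qscal (c2 * p ^ (n div 2)) qx1) (qscal (c3 * p ^ ((n - 1) div 2)) qx3)))
      | c0 c1 c2 c3. c0 \<in> OF v \<and> c1 \<in> OF v \<and> c2 \<in> OF v \<and> c3 \<in> OF v}"

definition subalg_M :: "'a::field quat \<Rightarrow> 'a quat set" where
  "subalg_M x = {qadd (qscal c0 qone) (qscal c1 x) | c0 c1. True}"

definition units_M :: "'a::field \<Rightarrow> 'a \<Rightarrow> 'a quat \<Rightarrow> 'a quat set" where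
  "units_M e p x = {y \<in> subalg_M x. \<exists>z\<in>subalg_M x. qmul e p y z = qone}"

definition coordM :: "'a::field quat \<Rightarrow> 'a quat \<Rightarrow> 'a \<times> 'a" where
  "coordM x w = (THE c. w = qadd (qscal (fst c) qone) (qscal (snd c) x))"

text \<open>Nm_{M/F}(y) = determinant of the F-linear map m |-> y m on M w.r.t. basis (1, x).\<close>
definition normM :: "'a::field \<Rightarrow> 'a \<Rightarrow> 'a quat \<Rightarrow> 'a quat \<Rightarrow> 'a" where
  "normM e p x y =
     (let c1 = coordM x (qmul e p y qone); c2 = coordM x (qmul e p y x)
      in fst c1 * snd c2 - fst c2 * snd c1)"

end

(* Let M = F(xi) for xi = x_{alpha beta}, a root of the Eisenstein polynomial X^2 - alpha X + Nr(xi).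
   Up to a scalar every m in M^x is 1 + t xi with t integral or s + xi with s in p, and conjugation by m
   maps w to an O_F-combination of w, xi w, w xi and xi w xi / pi, which all lie in O; so Nm(M^x) is
   contained in Nr(N(O)).  The pure quaternion g0 in F x2 + F x3 anticommuting with xi - alpha/2 also
   normalizes O.  Conversely, for g in N(O) the element y = g xi g^-1 of O has the trace and norm of xi,
   which forces its x2-coordinate to be 1 or -1 mod p.  Accordingly y - conj(xi) or g0 (y - xi)
   intertwines y with xi, so it differs from g by an element of the centralizer M, and its norm is
   -4 delta mod p^2, where M = F(sqrt delta) with v(delta) = 1; such elements are norms by Hensel's lemma.
   Hence Nr(N(O)) = Nm(M^x) iff Nr(g0) is a norm, i.e. iff -(1 - 4 eps) is a square mod p.  This is -1
   when A is split (eps = 0) and -1 times a non-square when A is ramified. *)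

theory Submission
  imports Defs
begin

section \<open>Discrete valuations\<close>

text \<open>The fractional ideal \<open>\<pp>\<^sup>k\<close>; \<open>0\<close> is listed separately because \<open>v 0\<close> is junk.\<close>

definition pideal :: "('a::field \<Rightarrow> int) \<Rightarrow> int \<Rightarrow> 'a set" where
  "pideal v k = {x. x = 0 \<or> k \<le> v x}"

locale discrete_valuation =
  fixes v :: "'a::field \<Rightarrow> int"
  assumes dval: "dval v"
begin

lemma v_mult: "x \<noteq> 0 \<Longrightarrow> y \<noteq> 0 \<Longrightarrow> v (x * y) = v x + v y"
  using dval unfolding dval_def by blast

lemma v_add: "x \<noteq> 0 \<Longrightarrow> y \<noteq> 0 \<Longrightarrow> x + y \<noteq> 0 \<Longrightarrow> min (v x) (v y) \<le> v (x + y)"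
  using dval unfolding dval_def by blast

lemma v_one [simp]: "v 1 = 0"
  using v_mult[of 1 1] by simp

lemma v_uminus [simp]: "v (- x) = v x"
proof (cases "x = 0")
  case False
  have "v (-1) = 0" using v_mult[of "-1" "-1"] by simp
  then show ?thesis using v_mult[of "-1" x] False by simp
qed simp

lemma v_inverse: "x \<noteq> 0 \<Longrightarrow> v (inverse x) = - v x"
  using v_mult[of x "inverse x"] by simp

lemma v_power: "x \<noteq> 0 \<Longrightarrow> v (x ^ k) = int k * v x"
  by (induction k) (auto simp: v_mult algebra_simps)

lemma v_add_dominant:
  assumes "x \<noteq> 0" and "y = 0 \<or> v x < v y"
  shows "x + y \<noteq> 0" and "v (x + y) = v x"
proof -
  show ne: "x + y \<noteq> 0"
  proof
    assume "x + y = 0"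
    then have "y = - x" by (simp add: add_eq_0_iff)
    then show False using assms by simp
  qed
  show "v (x + y) = v x"
  proof (cases "y = 0")
    case False
    with assms have lt: "v x < v y" by simp
    have "min (v x) (v y) \<le> v (x + y)" using v_add[OF assms(1) False ne] .
    moreover have "min (v (x + y)) (v (- y)) \<le> v x"
      using v_add[OF ne, of "- y"] False assms(1) by simp
    ultimately show ?thesis using lt by simp
  qed simp
qed

lemma pideal_0 [simp]: "0 \<in> pideal v k"
  by (simp add: pideal_def)

lemma pideal_1 [simp]: "1 \<in> pideal v 0"
  by (simp add: pideal_def)

lemma OF_eq: "OF v = pideal v 0"
  by (simp add: OF_def pideal_def)

lemma pid_eq: "pid v = pideal v 1"
  by (auto simp: pid_def pideal_def)

lemma pideal_add: "x \<in> pideal v k \<Longrightarrow> y \<in> pideal v k \<Longrightarrow> x + y \<in> pideal v k"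
  using v_add[of x y] by (cases "x = 0 \<or> y = 0 \<or> x + y = 0") (auto simp: pideal_def)

lemma pideal_uminus_iff [simp]: "- x \<in> pideal v k \<longleftrightarrow> x \<in> pideal v k"
  by (simp add: pideal_def)

lemma pideal_uminus: "x \<in> pideal v k \<Longrightarrow> - x \<in> pideal v k"
  by simp

lemma pideal_diff: "x \<in> pideal v k \<Longrightarrow> y \<in> pideal v k \<Longrightarrow> x - y \<in> pideal v k"
  using pideal_add[of x k "- y"] by simp

lemma pideal_diff_commute: "x - y \<in> pideal v k \<longleftrightarrow> y - x \<in> pideal v k"
  using pideal_uminus_iff[of "x - y"] by simp

lemma pideal_mono: "x \<in> pideal v k \<Longrightarrow> j \<le> k \<Longrightarrow> x \<in> pideal v j"
  by (auto simp: pideal_def)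

lemma pideal_mult: "x \<in> pideal v i \<Longrightarrow> y \<in> pideal v j \<Longrightarrow> x * y \<in> pideal v (i + j)"
  by (cases "x = 0 \<or> y = 0") (auto simp: pideal_def v_mult)

lemma pideal_mult_le: "x \<in> pideal v i \<Longrightarrow> y \<in> pideal v j \<Longrightarrow> k \<le> i + j \<Longrightarrow> x * y \<in> pideal v k"
  using pideal_mult pideal_mono by blast

lemma pideal_1_mult: "x \<in> pideal v 1 \<Longrightarrow> y \<in> pideal v 1 \<Longrightarrow> x * y \<in> pideal v 2"
  using pideal_mult[of x 1 y 1] by simp

lemma pideal_mult_integral: "c \<in> pideal v 0 \<Longrightarrow> x \<in> pideal v k \<Longrightarrow> c * x \<in> pideal v k"
  using pideal_mult[of c 0 x k] by simp

text \<open>Membership goals below are stated as sums of integral multiples \<open>c * x\<close> of elements \<open>x\<close> known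
  to lie in the target ideal, so that these rules decompose them without choosing levels.\<close>

lemmas pideal_intros = pideal_add pideal_diff pideal_uminus pideal_mult_integral

lemma pideal_of_nat [simp]: "of_nat m \<in> pideal v 0"
  by (induction m) (auto intro: pideal_add)

lemma pideal_numeral [simp]: "numeral m \<in> pideal v 0"
  using pideal_of_nat[of "numeral m"] by simp

lemma pideal_power: "x \<in> pideal v k \<Longrightarrow> x ^ m \<in> pideal v (int m * k)"
  by (induction m) (auto simp: algebra_simps intro: pideal_mult_le)

lemma pideal_divide: "x \<in> pideal v k \<Longrightarrow> y \<noteq> 0 \<Longrightarrow> x / y \<in> pideal v (k - v y)"
  by (cases "x = 0") (auto simp: pideal_def divide_inverse v_mult v_inverse)

lemma pideal_Inter_eq_0:
  assumes "\<And>k. x \<in> pideal v k"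
  shows "x = 0"
  using assms[of "v x + 1"] by (auto simp: pideal_def)

lemma OFunits_iff: "x \<in> OFunits v \<longleftrightarrow> x \<in> pideal v 0 \<and> x \<notin> pideal v 1"
  by (auto simp: OFunits_def pideal_def)

lemma OFunits_nonzero: "x \<in> OFunits v \<Longrightarrow> x \<noteq> 0"
  by (simp add: OFunits_def)

lemma OFunits_integral: "x \<in> OFunits v \<Longrightarrow> x \<in> pideal v 0"
  by (simp add: OFunits_iff)

lemma OFunits_one [simp]: "1 \<in> OFunits v"
  by (simp add: OFunits_def)

lemma OFunits_mult: "x \<in> OFunits v \<Longrightarrow> y \<in> OFunits v \<Longrightarrow> x * y \<in> OFunits v"
  by (auto simp: OFunits_def v_mult)

lemma OFunits_inverse: "x \<in> OFunits v \<Longrightarrow> inverse x \<in> OFunits v"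
  by (auto simp: OFunits_def v_inverse)

lemma OFunits_uminus: "x \<in> OFunits v \<Longrightarrow> - x \<in> OFunits v"
  by (auto simp: OFunits_def)

lemma OFunits_cong: "u \<in> OFunits v \<Longrightarrow> x - u \<in> pideal v 1 \<Longrightarrow> x \<in> OFunits v"
  using v_add_dominant[of u "x - u"] by (auto simp: OFunits_def pideal_def)

lemma OFunits_of_square: "x * x \<in> OFunits v \<Longrightarrow> x \<in> OFunits v"
  by (auto simp: OFunits_def v_mult)

lemma pideal_unit_mult_iff: "u \<in> OFunits v \<Longrightarrow> u * x \<in> pideal v k \<longleftrightarrow> x \<in> pideal v k"
  by (cases "x = 0") (auto simp: OFunits_def pideal_def v_mult)

lemma pideal_unit_mult_diff_iff:
  "u \<in> OFunits v \<Longrightarrow> u * x - u * y \<in> pideal v k \<longleftrightarrow> x - y \<in> pideal v k"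
  using pideal_unit_mult_iff[of u "x - y"] by (simp add: right_diff_distrib)

lemma pideal_divide_unit: "x \<in> pideal v k \<Longrightarrow> u \<in> OFunits v \<Longrightarrow> x / u \<in> pideal v k"
  using pideal_divide[of x k u] by (simp add: OFunits_def)

lemma pideal_prime:
  "x \<in> pideal v 0 \<Longrightarrow> y \<in> pideal v 0 \<Longrightarrow> x * y \<in> pideal v 1 \<Longrightarrow> x \<in> pideal v 1 \<or> y \<in> pideal v 1"
  using OFunits_mult[of x y] by (auto simp: OFunits_iff)

lemma pideal_div_uniformizer:
  "p * x \<in> pideal v (k + 1) \<Longrightarrow> p \<noteq> 0 \<Longrightarrow> v p = 1 \<Longrightarrow> x \<in> pideal v k"
  using pideal_divide[of "p * x" "k + 1" p] by simp

lemma residue_unit_square_cong: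
  "residue_unit_square v x \<Longrightarrow> y - x \<in> pideal v 1 \<Longrightarrow> residue_unit_square v y"
  unfolding residue_unit_square_def pid_eq using pideal_diff by fastforce

lemma residue_unit_square_square: "u \<in> OFunits v \<Longrightarrow> residue_unit_square v (u * u)"
  unfolding residue_unit_square_def pid_eq by force

lemma residue_unit_square_mult:
  assumes "residue_unit_square v x" "residue_unit_square v y" "x \<in> pideal v 0"
  shows "residue_unit_square v (x * y)"
proof -
  obtain u w where u: "u \<in> OFunits v" "u * u - x \<in> pideal v 1"
    and w: "w \<in> OFunits v" "w * w - y \<in> pideal v 1"
    using assms(1,2) unfolding residue_unit_square_def pid_eq by blast
  have "(u * w) * (u * w) - x * y = (u * u - x) * (w * w) + x * (w * w - y)"
    by (simp add: algebra_simps)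
  also have "\<dots> \<in> pideal v 1"
  proof -
    have "w * w \<in> pideal v 0" using pideal_mult[of w 0 w 0] w(1) OFunits_integral by simp
    then show ?thesis using pideal_mult[OF u(2)] pideal_mult[OF assms(3) w(2)] pideal_add by fastforce
  qed
  finally show ?thesis
    unfolding residue_unit_square_def pid_eq using OFunits_mult[OF u(1) w(1)] by blast
qed

lemma residue_unit_square_mult_square_iff:
  assumes "s \<in> OFunits v" "x \<in> pideal v 0"
  shows "residue_unit_square v (x * (s * s)) \<longleftrightarrow> residue_unit_square v x"
proof
  assume "residue_unit_square v (x * (s * s))"
  then obtain t where t: "t \<in> OFunits v" "t * t - x * (s * s) \<in> pideal v 1"
    unfolding residue_unit_square_def pid_eq by blast
  have s0: "s \<noteq> 0" using assms(1) by (rule OFunits_nonzero)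
  have "(t / s) * (t / s) - x = (t * t - x * (s * s)) / (s * s)"
    using s0 by (simp add: field_simps)
  also have "\<dots> \<in> pideal v 1"
    using t(2) OFunits_mult[OF assms(1,1)] by (rule pideal_divide_unit)
  finally show "residue_unit_square v x"
    unfolding residue_unit_square_def pid_eq
    using OFunits_mult[OF t(1) OFunits_inverse[OF assms(1)]] by (auto simp: divide_inverse)
qed (use assms residue_unit_square_mult residue_unit_square_square in blast)

text \<open>The valuations of \<open>X\<^sup>2\<close> and \<open>dY\<^sup>2\<close> have different parities.\<close>

lemma diff_squares_valuation_one:
  assumes d: "d \<noteq> 0" "v d = 1"
    and z: "X * X - d * (Y * Y) \<noteq> 0" "v (X * X - d * (Y * Y)) = 1"
  shows "Y \<noteq> 0 \<and> v Y = 0" and "X * X \<in> pideal v 2"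
proof -
  have Y0: "Y \<noteq> 0"
  proof
    assume "Y = 0"
    then have "v (X * X) = 1" "X \<noteq> 0" using z by auto
    then show False using v_mult[of X X] by simp presburger
  qed
  have dY: "- (d * (Y * Y)) \<noteq> 0" "v (- (d * (Y * Y))) = 1 + 2 * v Y"
    using Y0 d by (simp_all add: v_mult)
  have X_small: "X = 0 \<or> 1 + 2 * v Y < 2 * v X"
  proof (rule ccontr)
    assume "\<not> ?thesis"
    then have X0: "X \<noteq> 0" and "2 * v X \<le> 1 + 2 * v Y" by auto
    then have "2 * v X < 1 + 2 * v Y" by presburger
    then have "v (X * X + - (d * (Y * Y))) = 2 * v X"
      using v_add_dominant[of "X * X" "- (d * (Y * Y))"] X0 dY by (simp add: v_mult)
    then show False using z by simp presburger
  qed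
  then have "X * X = 0 \<or> v (- (d * (Y * Y))) < v (X * X)"
    using dY(2) v_mult[of X X] by (cases "X = 0") auto
  then have "v (- (d * (Y * Y)) + X * X) = 1 + 2 * v Y"
    using v_add_dominant[OF dY(1)] dY(2) by auto
  then have vY: "v Y = 0" using z by (simp add: algebra_simps)
  then show "Y \<noteq> 0 \<and> v Y = 0" using Y0 by simp
  show "X * X \<in> pideal v 2"
    using X_small vY v_mult[of X X] by (cases "X = 0") (auto simp: pideal_def)
qed

lemma vclose_iff: "vclose v k x y \<longleftrightarrow> x - y \<in> pideal v k"
  by (auto simp: vclose_def pideal_def)

end

section \<open>Hensel's lemma for square roots\<close>

primrec newton_sqrt :: "'a::field \<Rightarrow> nat \<Rightarrow> 'a" where
  "newton_sqrt u 0 = 1"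
| "newton_sqrt u (Suc k) = newton_sqrt u k + (u - newton_sqrt u k * newton_sqrt u k) / 2"

locale nondyadic_dv = discrete_valuation v for v :: "'a::field \<Rightarrow> int" +
  assumes two_unit: "(2::'a) \<in> OFunits v"
begin

lemma four_unit: "(4::'a) \<in> OFunits v"
  using OFunits_mult[OF two_unit two_unit] by simp

lemma newton_sqrt_approx:
  assumes u: "u - 1 \<in> pideal v 1"
  shows "newton_sqrt u k - 1 \<in> pideal v 1 \<and> u - newton_sqrt u k * newton_sqrt u k \<in> pideal v (int k + 1)"
proof (induction k)
  case (Suc k)
  define w where "w = newton_sqrt u k"
  define h where "h = (u - w * w) / 2"
  have w: "w - 1 \<in> pideal v 1" and d: "u - w * w \<in> pideal v (int k + 1)"
    using Suc by (simp_all add: w_def)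
  have h: "h \<in> pideal v (int k + 1)" using d two_unit unfolding h_def by (rule pideal_divide_unit)
  have "newton_sqrt u (Suc k) - 1 = (w - 1) + h" by (simp add: w_def h_def)
  also have "\<dots> \<in> pideal v 1" using w h by (intro pideal_add) (auto elim: pideal_mono)
  finally have A: "newton_sqrt u (Suc k) - 1 \<in> pideal v 1" .
  have "newton_sqrt u (Suc k) = w + h" by (simp add: w_def h_def)
  moreover have "u = w * w + 2 * h" using OFunits_nonzero[OF two_unit] by (simp add: h_def field_simps)
  ultimately have "u - newton_sqrt u (Suc k) * newton_sqrt u (Suc k) = (u - w * w) * (1 - w) - h * h"
    by (simp add: algebra_simps)
  also have "\<dots> \<in> pideal v (int (Suc k) + 1)"
  proof (rule pideal_diff)
    show "(u - w * w) * (1 - w) \<in> pideal v (int (Suc k) + 1)"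
      using pideal_mult[OF d w[unfolded pideal_diff_commute]] by simp
    show "h * h \<in> pideal v (int (Suc k) + 1)"
      using pideal_mult_le[OF h h] by simp
  qed
  finally show ?case using A by simp
qed (use u in simp)

lemma newton_sqrt_step:
  "u - 1 \<in> pideal v 1 \<Longrightarrow> newton_sqrt u (Suc k) - newton_sqrt u k \<in> pideal v (int k + 1)"
  using newton_sqrt_approx[of u k] two_unit by (simp add: pideal_divide_unit)

end

locale complete_nondyadic_dv = nondyadic_dv +
  assumes complete: "vcomplete v"
begin

lemma limit_of_fast_cauchy:
  assumes step: "\<And>k. f (Suc k) - f k \<in> pideal v (int k + 1)"
  shows "\<exists>L. \<forall>k. \<exists>N. \<forall>n\<ge>N. f n - L \<in> pideal v k"
proof -
  have tail: "f m - f N \<in> pideal v (int N + 1)" if "N \<le> m" for m N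
    using that
  proof (induction m)
    case (Suc m)
    show ?case
    proof (cases "N = Suc m")
      case False
      then have "N \<le> m" using Suc.prems by simp
      have "f (Suc m) - f N = (f (Suc m) - f m) + (f m - f N)" by simp
      also have "\<dots> \<in> pideal v (int N + 1)"
        using pideal_mono[OF step[of m]] Suc.IH[OF \<open>N \<le> m\<close>] \<open>N \<le> m\<close> by (intro pideal_add) auto
      finally show ?thesis .
    qed simp
  qed simp
  have "\<exists>N. \<forall>m\<ge>N. \<forall>n\<ge>N. vclose v k (f m) (f n)" for k
  proof (intro exI allI impI)
    fix m n assume "nat k \<le> m" "nat k \<le> n"
    then have "(f m - f (nat k)) - (f n - f (nat k)) \<in> pideal v (int (nat k) + 1)"
      using pideal_diff[OF tail tail] by blast
    then show "vclose v k (f m) (f n)"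
      unfolding vclose_iff by (auto elim: pideal_mono)
  qed
  then show ?thesis
    using complete unfolding vcomplete_def vclose_iff by blast
qed

lemma sqrt_near_one:
  assumes u: "u - 1 \<in> pideal v 1"
  shows "\<exists>w. w * w = u \<and> w - 1 \<in> pideal v 1"
proof -
  let ?f = "newton_sqrt u"
  obtain L where L: "\<forall>k. \<exists>N. \<forall>n\<ge>N. ?f n - L \<in> pideal v k"
    using limit_of_fast_cauchy newton_sqrt_step[OF u] by blast
  note approx = newton_sqrt_approx[OF u]
  have "L * L - u \<in> pideal v k" for k
  proof -
    obtain N where N: "\<forall>n\<ge>N. ?f n - L \<in> pideal v (max k 0)" using L by blast
    define m where "m = max N (nat k)"
    have "?f m - L \<in> pideal v (max k 0)" using N by (simp add: m_def)
    then have Lf: "L - ?f m \<in> pideal v (max k 0)" by (simp only: pideal_diff_commute)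
    have "L - ?f m \<in> pideal v 0" using pideal_mono[OF Lf] by simp
    moreover have "?f m \<in> pideal v 0"
      using pideal_add[OF pideal_mono[OF conjunct1[OF approx[of m]]] pideal_1] by simp
    ultimately have "(L - ?f m) + 2 * ?f m \<in> pideal v 0"
      by (intro pideal_add pideal_mult_integral) simp_all
    then have Lf': "L + ?f m \<in> pideal v 0" by (simp add: add.commute)
    have "L * L - u = (L - ?f m) * (L + ?f m) - (u - ?f m * ?f m)" by (simp add: algebra_simps)
    also have "\<dots> \<in> pideal v k"
    proof (rule pideal_diff)
      show "(L - ?f m) * (L + ?f m) \<in> pideal v k" using pideal_mult_le[OF Lf Lf'] by simp
      show "u - ?f m * ?f m \<in> pideal v k"
        using conjunct2[OF approx[of m]] by (rule pideal_mono) (simp add: m_def)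
    qed
    finally show ?thesis .
  qed
  then have "L * L = u" using pideal_Inter_eq_0[of "L * L - u"] by simp
  moreover have "L - 1 \<in> pideal v 1"
  proof -
    obtain N where "\<forall>n\<ge>N. ?f n - L \<in> pideal v 1" using L by blast
    then have "(?f N - 1) - (?f N - L) \<in> pideal v 1" using pideal_diff approx by blast
    then show ?thesis by simp
  qed
  ultimately show ?thesis by blast
qed

lemma hensel_sqrt:
  assumes "residue_unit_square v u"
  shows "\<exists>w\<in>OFunits v. w * w = u"
proof -
  obtain w0 where w0: "w0 \<in> OFunits v" "w0 * w0 - u \<in> pideal v 1"
    using assms unfolding residue_unit_square_def pid_eq by blast
  have w00: "w0 \<noteq> 0" using w0(1) by (rule OFunits_nonzero)
  have "u / (w0 * w0) - 1 = - ((w0 * w0 - u) / (w0 * w0))" using w00 by (simp add: field_simps)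
  also have "\<dots> \<in> pideal v 1"
    using w0 OFunits_mult[OF w0(1,1)] by (simp add: pideal_divide_unit)
  finally obtain w where w: "w * w = u / (w0 * w0)" "w - 1 \<in> pideal v 1"
    using sqrt_near_one by blast
  have "w \<in> OFunits v" using OFunits_cong[OF OFunits_one w(2)] .
  then have "w * w0 \<in> OFunits v" using w0(1) by (rule OFunits_mult)
  moreover have "(w * w0) * (w * w0) = u" using w(1) w00 by (simp add: field_simps)
  ultimately show ?thesis by blast
qed

text \<open>\<open>N = 1 + b + b\<^sup>2e\<close> is the norm of \<open>1 + b x\<^sub>1\<close> from \<open>F(x\<^sub>1)\<close>; as
  \<open>4N = (2 + b)\<^sup>2 - (1 - 4e)b\<^sup>2\<close>, a non-unit \<open>N\<close> would make \<open>1 - 4e\<close> a square modulo \<open>\<pp>\<close>.\<close>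

lemma unramified_norm_form_unit:
  assumes e: "e \<in> pideal v 0" and b: "b \<in> pideal v 0"
    and disc: "1 - 4 * e \<in> OFunits v" and nonsquare: "\<not> (\<exists>u\<in>OFunits v. u * u = 1 - 4 * e)"
  shows "1 + b + b * b * e \<in> OFunits v"
proof (rule ccontr)
  define N where "N = 1 + b + b * b * e"
  assume "N \<notin> OFunits v"
  moreover have "N \<in> pideal v 0" using e b by (auto simp: N_def intro!: pideal_intros)
  ultimately have N: "N \<in> pideal v 1" by (simp add: OFunits_iff)
  have b_unit: "b \<in> OFunits v"
  proof (rule ccontr)
    assume "b \<notin> OFunits v"
    then have "b \<in> pideal v 1" using b by (simp add: OFunits_iff)
    then have "N - (b + (b * e) * b) \<in> pideal v 1"
      using N b e by (auto intro!: pideal_intros)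
    then show False by (simp add: N_def pideal_def algebra_simps)
  qed
  define z where "z = (2 + b) / b"
  have "z * z - (1 - 4 * e) = (4 * N) / (b * b)"
    using OFunits_nonzero[OF b_unit] by (simp add: z_def N_def field_simps)
  also have "\<dots> \<in> pideal v 1"
    using N OFunits_mult[OF b_unit b_unit] by (auto intro!: pideal_divide_unit pideal_intros)
  finally have z: "z * z - (1 - 4 * e) \<in> pideal v 1" .
  then have "z \<in> OFunits v" using OFunits_cong[OF disc] OFunits_of_square by blast
  with z have "residue_unit_square v (1 - 4 * e)"
    unfolding residue_unit_square_def pid_eq by blast
  then show False using hensel_sqrt nonsquare by blast
qed

end

section \<open>Squares in a finite residue field\<close>

locale finite_residue_dv = nondyadic_dv +
  assumes finite_res: "finite_residue v"
begin

definition residue_reps :: "'a set" where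
  "residue_reps = (SOME S. finite S \<and> S \<subseteq> OF v \<and> (\<forall>x\<in>OF v. \<exists>s\<in>S. x - s \<in> pid v))"

lemma residue_reps:
  "finite residue_reps" "residue_reps \<subseteq> pideal v 0"
  "\<And>x. x \<in> pideal v 0 \<Longrightarrow> \<exists>s\<in>residue_reps. x - s \<in> pideal v 1"
proof -
  have "finite residue_reps \<and> residue_reps \<subseteq> OF v \<and> (\<forall>x\<in>OF v. \<exists>s\<in>residue_reps. x - s \<in> pid v)"
    unfolding residue_reps_def
    by (rule someI_ex) (use finite_res in \<open>simp add: finite_residue_def\<close>)
  then show "finite residue_reps" "residue_reps \<subseteq> pideal v 0"
    "\<And>x. x \<in> pideal v 0 \<Longrightarrow> \<exists>s\<in>residue_reps. x - s \<in> pideal v 1"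
    by (auto simp: OF_eq pid_eq)
qed

definition rep :: "'a \<Rightarrow> 'a" where
  "rep x = (SOME s. s \<in> residue_reps \<and> x - s \<in> pideal v 1)"

lemma rep: "x \<in> pideal v 0 \<Longrightarrow> rep x \<in> residue_reps \<and> x - rep x \<in> pideal v 1"
  unfolding rep_def by (rule someI_ex) (use residue_reps(3) in blast)

lemma rep_cong: "x - y \<in> pideal v 1 \<Longrightarrow> rep x = rep y"
proof -
  assume xy: "x - y \<in> pideal v 1"
  have "x - s \<in> pideal v 1 \<longleftrightarrow> y - s \<in> pideal v 1" for s
  proof
    assume "x - s \<in> pideal v 1"
    then have "(x - s) - (x - y) \<in> pideal v 1" using xy by (rule pideal_diff)
    then show "y - s \<in> pideal v 1" by simp
  next
    assume "y - s \<in> pideal v 1"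
    then have "(y - s) + (x - y) \<in> pideal v 1" using xy by (rule pideal_add)
    then show "x - s \<in> pideal v 1" by simp
  qed
  then show ?thesis unfolding rep_def by simp
qed

lemma rep_eq_iff: "x \<in> pideal v 0 \<Longrightarrow> y \<in> pideal v 0 \<Longrightarrow> rep x = rep y \<longleftrightarrow> x - y \<in> pideal v 1"
proof
  assume "x \<in> pideal v 0" "y \<in> pideal v 0" "rep x = rep y"
  then have "(x - rep x) - (y - rep y) \<in> pideal v 1"
    using pideal_diff[OF conjunct2[OF rep] conjunct2[OF rep]] by blast
  then show "x - y \<in> pideal v 1" using \<open>rep x = rep y\<close> by simp
qed (rule rep_cong)

definition unit_reps :: "'a set" where
  "unit_reps = rep ` OFunits v"

lemma finite_unit_reps: "finite unit_reps"
proof (rule finite_subset[OF _ residue_reps(1)])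
  show "unit_reps \<subseteq> residue_reps" unfolding unit_reps_def using rep OFunits_integral by blast
qed

lemma unit_reps: "s \<in> unit_reps \<Longrightarrow> s \<in> OFunits v \<and> rep s = s"
proof -
  assume "s \<in> unit_reps"
  then obtain x where x: "x \<in> OFunits v" "s = rep x" unfolding unit_reps_def by blast
  have xs: "x - s \<in> pideal v 1" using rep[OF OFunits_integral[OF x(1)]] x(2) by simp
  have "s \<in> OFunits v" using OFunits_cong[OF x(1) xs[unfolded pideal_diff_commute]] .
  moreover have "rep s = s" using rep_cong[OF xs] x(2) by simp
  ultimately show ?thesis ..
qed

lemma rep_in_unit_reps: "x \<in> OFunits v \<Longrightarrow> rep x \<in> unit_reps"
  by (simp add: unit_reps_def)

lemma rep_eq_iff_units:
  "x \<in> OFunits v \<Longrightarrow> y \<in> OFunits v \<Longrightarrow> rep x = rep y \<longleftrightarrow> x - y \<in> pideal v 1"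
  using rep_eq_iff OFunits_integral by blast

definition square_reps :: "'a set" where
  "square_reps = (\<lambda>s. rep (s * s)) ` unit_reps"

lemma square_reps_subset: "square_reps \<subseteq> unit_reps"
proof
  fix y assume "y \<in> square_reps"
  then obtain s where "s \<in> unit_reps" "y = rep (s * s)" unfolding square_reps_def by blast
  then show "y \<in> unit_reps" using unit_reps OFunits_mult rep_in_unit_reps by simp
qed

lemma rep_in_square_reps_iff:
  assumes x: "x \<in> OFunits v"
  shows "rep x \<in> square_reps \<longleftrightarrow> residue_unit_square v x"
proof
  assume "rep x \<in> square_reps"
  then obtain s where s: "s \<in> unit_reps" "rep x = rep (s * s)" unfolding square_reps_def by blast
  have su: "s \<in> OFunits v" using unit_reps[OF s(1)] by blast
  have "s * s - x \<in> pideal v 1"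
    using rep_eq_iff_units[OF OFunits_mult[OF su su] x] s(2) by simp
  then show "residue_unit_square v x"
    unfolding residue_unit_square_def pid_eq using su by blast
next
  assume "residue_unit_square v x"
  then obtain u where u: "u \<in> OFunits v" "u * u - x \<in> pideal v 1"
    unfolding residue_unit_square_def pid_eq by blast
  have ru: "rep u \<in> OFunits v" using unit_reps[OF rep_in_unit_reps[OF u(1)]] by blast
  have "rep u - u \<in> pideal v 1"
    using rep[OF OFunits_integral[OF u(1)]] by (simp add: pideal_diff_commute[of u])
  moreover have "rep u + u \<in> pideal v 0"
    using ru u(1) by (intro pideal_add OFunits_integral)
  ultimately have "rep u * rep u - u * u \<in> pideal v 1"
    using pideal_mult_le[of "rep u + u" 0 "rep u - u" 1 1] by (simp add: square_diff_square_factored)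
  then have "(rep u * rep u - u * u) + (u * u - x) \<in> pideal v 1"
    using u(2) by (rule pideal_add)
  then have "rep x = rep (rep u * rep u)" by (intro rep_cong) (simp add: pideal_diff_commute[of x])
  then show "rep x \<in> square_reps"
    unfolding square_reps_def using rep_in_unit_reps[OF u(1)] by (rule image_eqI)
qed

lemma square_reps_units: "s \<in> square_reps \<Longrightarrow> s \<in> OFunits v \<and> rep s = s"
  using square_reps_subset unit_reps by blast

lemma rep_square_cong:
  assumes "x \<in> pideal v 0" "y \<in> pideal v 0" "x - y \<in> pideal v 1"
  shows "rep (x * x) = rep (y * y)"
proof (rule rep_cong)
  have "(x + y) * (x - y) \<in> pideal v (0 + 1)"
    using assms by (intro pideal_mult pideal_add)
  then show "x * x - y * y \<in> pideal v 1" by (simp add: square_diff_square_factored)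
qed

lemma rep_uminus_neq: "s \<in> unit_reps \<Longrightarrow> rep (- s) \<noteq> s"
proof
  assume s: "s \<in> unit_reps" and "rep (- s) = s"
  then have su: "s \<in> OFunits v" "rep s = s" and "rep (- s) = rep s" using unit_reps by auto
  then have "2 * s \<in> pideal v 1"
    using rep_eq_iff_units[OF OFunits_uminus[OF su(1)] su(1)] by simp
  then show False using pideal_unit_mult_iff[OF su(1), of 2] two_unit by (simp add: OFunits_iff mult.commute)
qed

lemma squaring_fiber:
  assumes s: "s \<in> unit_reps"
  shows "{t \<in> unit_reps. rep (t * t) = rep (s * s)} = {s, rep (- s)}"
proof (intro equalityI subsetI)
  have su: "s \<in> OFunits v" "rep s = s" using unit_reps[OF s] by auto
  fix t assume "t \<in> {t \<in> unit_reps. rep (t * t) = rep (s * s)}"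
  then have t: "t \<in> unit_reps" "rep (t * t) = rep (s * s)" by auto
  have tu: "t \<in> OFunits v" "rep t = t" using unit_reps[OF t(1)] by auto
  have "(t + s) * (t - s) \<in> pideal v 1"
    using t(2) rep_eq_iff_units[OF OFunits_mult[OF tu(1,1)] OFunits_mult[OF su(1,1)]]
    by (simp add: square_diff_square_factored)
  moreover have "t + s \<in> pideal v 0" "t - s \<in> pideal v 0"
    using su tu OFunits_integral pideal_add pideal_diff by blast+
  ultimately have "t + s \<in> pideal v 1 \<or> t - s \<in> pideal v 1"
    by (intro pideal_prime)
  then show "t \<in> {s, rep (- s)}"
    using rep_cong[of t "- s"] rep_cong[of t s] tu(2) su(2) by auto
next
  have ms: "- s \<in> OFunits v" using OFunits_uminus unit_reps[OF s] by blast
  have "rep (rep (- s) * rep (- s)) = rep ((- s) * (- s))"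
    using rep[OF OFunits_integral[OF ms]] unit_reps[OF rep_in_unit_reps[OF ms]] ms
    by (intro rep_square_cong OFunits_integral) (simp_all add: pideal_diff_commute[of _ "rep (- s)"])
  then show "t \<in> {t \<in> unit_reps. rep (t * t) = rep (s * s)}" if "t \<in> {s, rep (- s)}" for t
    using that s rep_in_unit_reps[OF ms] by auto
qed

lemma card_unit_reps: "card unit_reps = 2 * card square_reps"
proof -
  have "unit_reps = (\<Union>y\<in>square_reps. {t \<in> unit_reps. rep (t * t) = y})"
    unfolding square_reps_def by auto
  moreover have "card (\<Union>y\<in>square_reps. {t \<in> unit_reps. rep (t * t) = y})
      = (\<Sum>y\<in>square_reps. card {t \<in> unit_reps. rep (t * t) = y})"
    by (rule card_UN_disjoint) (use finite_unit_reps square_reps_subset finite_subset in auto)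
  moreover have "card {t \<in> unit_reps. rep (t * t) = y} = 2" if y: "y \<in> square_reps" for y
  proof -
    obtain s where "s \<in> unit_reps" "y = rep (s * s)" using y unfolding square_reps_def by blast
    then show ?thesis using squaring_fiber[of s] rep_uminus_neq[of s] by simp
  qed
  ultimately show ?thesis by simp
qed

lemma rep_mult_inj_on:
  assumes "u \<in> OFunits v"
  shows "inj_on (\<lambda>s. rep (u * s)) square_reps"
proof (rule inj_onI)
  fix s t assume st: "s \<in> square_reps" "t \<in> square_reps" "rep (u * s) = rep (u * t)"
  then have "u * s - u * t \<in> pideal v 1"
    using rep_eq_iff_units[OF OFunits_mult[OF assms] OFunits_mult[OF assms]] square_reps_units by simp
  then have "rep s = rep t" using pideal_unit_mult_diff_iff[OF assms] rep_cong by blast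
  then show "s = t" using square_reps_units st by simp
qed

lemma rep_mult_nonsquare:
  assumes u: "u \<in> OFunits v" "\<not> residue_unit_square v u" and s: "s \<in> square_reps"
  shows "rep (u * s) \<in> unit_reps - square_reps"
proof -
  obtain r where r: "r \<in> unit_reps" "s = rep (r * r)" using s unfolding square_reps_def by blast
  have ru: "r \<in> OFunits v" and su: "s \<in> OFunits v" using unit_reps[OF r(1)] square_reps_units[OF s] by auto
  have "\<not> residue_unit_square v (u * s)"
  proof
    assume us: "residue_unit_square v (u * s)"
    have "u * (r * r) - u * s \<in> pideal v 1"
      using rep[OF OFunits_integral[OF OFunits_mult[OF ru ru]]] r(2) pideal_unit_mult_diff_iff[OF u(1)]
      by simp
    with us have "residue_unit_square v (u * (r * r))" by (rule residue_unit_square_cong)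
    then show False
      using residue_unit_square_mult_square_iff[OF ru OFunits_integral[OF u(1)]] u(2) by simp
  qed
  then show ?thesis
    using rep_in_square_reps_iff[OF OFunits_mult[OF u(1) su]] rep_in_unit_reps[OF OFunits_mult[OF u(1) su]]
    by simp
qed

text \<open>The map is injective and lands in the non-squares, which are exactly as many as the squares.\<close>

lemma rep_mult_nonsquare_image:
  assumes "u \<in> OFunits v" "\<not> residue_unit_square v u"
  shows "(\<lambda>s. rep (u * s)) ` square_reps = unit_reps - square_reps"
proof (rule card_subset_eq[OF finite_Diff[OF finite_unit_reps]])
  show "(\<lambda>s. rep (u * s)) ` square_reps \<subseteq> unit_reps - square_reps"
    using rep_mult_nonsquare[OF assms] by blast
  have "card (unit_reps - square_reps) = card square_reps"
    using card_Diff_subset[OF finite_subset[OF square_reps_subset finite_unit_reps] square_reps_subset]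
      card_unit_reps by simp
  then show "card ((\<lambda>s. rep (u * s)) ` square_reps) = card (unit_reps - square_reps)"
    using card_image[OF rep_mult_inj_on[OF assms(1)]] by simp
qed

lemma residue_nonsquare_mult_nonsquare:
  assumes u: "u \<in> OFunits v" "\<not> residue_unit_square v u"
    and w: "w \<in> OFunits v" "\<not> residue_unit_square v w"
  shows "residue_unit_square v (u * w)"
proof -
  have "rep w \<in> unit_reps - square_reps"
    using rep_in_unit_reps[OF w(1)] rep_in_square_reps_iff[OF w(1)] w(2) by simp
  then obtain s where s: "rep w = rep (u * s)" "s \<in> square_reps"
    unfolding rep_mult_nonsquare_image[OF u, symmetric] by (rule imageE)
  have su: "s \<in> OFunits v" using square_reps_units[OF s(2)] by blast
  have "residue_unit_square v s"
    using rep_in_square_reps_iff[OF su] s(2) square_reps_units[OF s(2)] by simp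
  then have square: "residue_unit_square v (s * (u * u))"
    using residue_unit_square_mult_square_iff[OF u(1) OFunits_integral[OF su]] by simp
  have "u * w - u * (u * s) \<in> pideal v 1"
    using rep_eq_iff_units[OF w(1) OFunits_mult[OF u(1) su]] s(1) pideal_unit_mult_diff_iff[OF u(1)]
    by simp
  then have "u * w - s * (u * u) \<in> pideal v 1" by (simp add: ac_simps)
  with square show ?thesis by (rule residue_unit_square_cong)
qed

lemma residue_square_mult_nonsquare_iff:
  assumes u: "u \<in> OFunits v" "\<not> residue_unit_square v u" and w: "w \<in> OFunits v"
  shows "residue_unit_square v (u * w) \<longleftrightarrow> \<not> residue_unit_square v w"
proof
  assume uw: "residue_unit_square v (u * w)"
  show "\<not> residue_unit_square v w"
  proof
    assume "residue_unit_square v w"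
    then obtain t where t: "t \<in> OFunits v" "t * t - w \<in> pideal v 1"
      unfolding residue_unit_square_def pid_eq by blast
    have "u * (t * t) - u * w \<in> pideal v 1"
      using t(2) pideal_unit_mult_diff_iff[OF u(1)] by simp
    with uw have "residue_unit_square v (u * (t * t))" by (rule residue_unit_square_cong)
    then show False
      using residue_unit_square_mult_square_iff[OF t(1) OFunits_integral[OF u(1)]] u(2) by simp
  qed
qed (use assms residue_nonsquare_mult_nonsquare in blast)

end

section \<open>Quaternion arithmetic\<close>

lemma qmul_Q:
  "qmul e p (Q a0 a1 a2 a3) (Q b0 b1 b2 b3) =
    Q (a0*b0 - e*a1*b1 + p*(a2*(b2+b3) + e*a3*b3))
      (a0*b1 + a1*b0 + a1*b1 - p*(a2*b3 - a3*b2))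
      (a0*b2 - e*a1*b3 + a2*(b0+b1) + e*a3*b1)
      (a0*b3 + a1*b2 + a1*b3 - a2*b1 + a3*b0)"
  by (simp add: kmul_def kadd_def kscal_def ksig_def Let_def algebra_simps)

declare qmul.simps [simp del]

fun qc1 :: "'a quat \<Rightarrow> 'a" where "qc1 (Q a0 a1 a2 a3) = a1"
fun qc2 :: "'a quat \<Rightarrow> 'a" where "qc2 (Q a0 a1 a2 a3) = a2"
fun qc3 :: "'a quat \<Rightarrow> 'a" where "qc3 (Q a0 a1 a2 a3) = a3"

lemma quat_eta: "Q (qc0 x) (qc1 x) (qc2 x) (qc3 x) = x"
  by (cases x) simp

fun qdiff :: "'a::field quat \<Rightarrow> 'a quat \<Rightarrow> 'a quat" where
  "qdiff (Q a0 a1 a2 a3) (Q b0 b1 b2 b3) = Q (a0 - b0) (a1 - b1) (a2 - b2) (a3 - b3)"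

fun trd :: "'a::field quat \<Rightarrow> 'a" where
  "trd (Q a0 a1 a2 a3) = 2 * a0 + a1"

lemma nrd_Q: "nrd e p (Q y0 y1 y2 y3) = y0*y0 + y0*y1 + e*y1*y1 - p*(y2*y2 + y2*y3 + e*y3*y3)"
  by (simp add: nrd_def qmul_Q algebra_simps)

context
  fixes e p :: "'a::field"
begin

abbreviation qprod :: "'a quat \<Rightarrow> 'a quat \<Rightarrow> 'a quat" (infixl "\<cdot>" 70)
  where "x \<cdot> y \<equiv> qmul e p x y"

lemma qmul_assoc: "x \<cdot> y \<cdot> z = x \<cdot> (y \<cdot> z)"
  by (cases x; cases y; cases z) (simp add: qmul_Q algebra_simps)

lemma qmul_qscal_left: "qscal c x \<cdot> y = qscal c (x \<cdot> y)"
  by (cases x; cases y) (simp add: qmul_Q algebra_simps)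

lemma qmul_qscal_right: "x \<cdot> qscal c y = qscal c (x \<cdot> y)"
  by (cases x; cases y) (simp add: qmul_Q algebra_simps)

lemma qmul_qone_left [simp]: "qone \<cdot> x = x"
  by (cases x) (simp add: qmul_Q qone_def)

lemma qmul_qone_right [simp]: "x \<cdot> qone = x"
  by (cases x) (simp add: qmul_Q qone_def)

lemma qscal_qscal [simp]: "qscal c (qscal d x) = qscal (c * d) x"
  by (cases x) (simp add: algebra_simps)

lemma qscal_qadd: "qscal c (qadd x y) = qadd (qscal c x) (qscal c y)"
  by (cases x; cases y) (simp add: algebra_simps)

lemma qscal_1 [simp]: "qscal 1 x = x"
  by (cases x) simp

lemma nrd_mult: "nrd e p (x \<cdot> y) = nrd e p x * nrd e p y"
  by (cases x; cases y) (simp add: nrd_Q qmul_Q algebra_simps)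

lemma nrd_qone [simp]: "nrd e p qone = 1"
  by (simp add: nrd_Q qone_def)

lemma qmul_qconj_right: "x \<cdot> qconj x = qscal (nrd e p x) qone"
  by (cases x) (simp add: nrd_Q qmul_Q qone_def algebra_simps)

lemma qmul_qconj_left: "qconj x \<cdot> x = qscal (nrd e p x) qone"
  by (cases x) (simp add: nrd_Q qmul_Q qone_def algebra_simps)

lemma trd_qmul_commute: "trd (x \<cdot> y) = trd (y \<cdot> x)"
  by (cases x; cases y) (simp add: qmul_Q algebra_simps)

lemma nrd_nonzero_if_invertible: "g \<cdot> h = qone \<Longrightarrow> nrd e p g \<noteq> 0"
  using nrd_mult[of g h] by auto

lemma trd_conj_invariant: "h \<cdot> g = qone \<Longrightarrow> trd (g \<cdot> y \<cdot> h) = trd y"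
  using trd_qmul_commute[of g "y \<cdot> h"] by (simp add: qmul_assoc)

lemma nrd_conj_invariant: "g \<cdot> h = qone \<Longrightarrow> nrd e p (g \<cdot> y \<cdot> h) = nrd e p y"
  using nrd_mult[of g h] by (simp add: nrd_mult)

text \<open>Under these hypotheses \<open>x\<close> and \<open>y\<close> are roots of the same quadratic polynomial.\<close>

lemma intertwine_conj:
  assumes "trd y = trd x" "nrd e p y = nrd e p x"
  shows "qdiff y (qconj x) \<cdot> y = x \<cdot> qdiff y (qconj x)"
proof -
  obtain x0 x1 x2 x3 y0 y1 y2 y3 where xy: "x = Q x0 x1 x2 x3" "y = Q y0 y1 y2 y3"
    by (cases x, cases y)
  show ?thesis using assms unfolding xy by (simp add: qmul_Q nrd_Q) algebra
qed

lemma intertwine: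
  assumes "trd y = trd x" "nrd e p y = nrd e p x"
  shows "qdiff y x \<cdot> y = qconj x \<cdot> qdiff y x"
proof -
  obtain x0 x1 x2 x3 y0 y1 y2 y3 where xy: "x = Q x0 x1 x2 x3" "y = Q y0 y1 y2 y3"
    by (cases x, cases y)
  show ?thesis using assms unfolding xy by (simp add: qmul_Q nrd_Q) algebra
qed

lemma normalizerI:
  assumes "g \<cdot> h = qone" "h \<cdot> g = qone"
    and "\<And>w. w \<in> Ord \<Longrightarrow> g \<cdot> w \<cdot> h \<in> Ord" and "\<And>w. w \<in> Ord \<Longrightarrow> h \<cdot> w \<cdot> g \<in> Ord"
  shows "g \<in> normalizer e p Ord"
proof -
  have "z \<in> (\<lambda>w. g \<cdot> w \<cdot> h) ` Ord" if "z \<in> Ord" for z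
  proof
    show "z = g \<cdot> (h \<cdot> z \<cdot> g) \<cdot> h"
      using assms(1) by (simp add: qmul_assoc flip: qmul_assoc[of g h])
  qed (use assms(4) that in blast)
  then show ?thesis
    unfolding normalizer_def using assms(1-3) by blast
qed

end

section \<open>The Bass order\<close>

locale bass_order_setting = complete_nondyadic_dv v for v :: "'a::field \<Rightarrow> int" +
  fixes p e a b :: 'a and n :: nat
  assumes uniformizer: "uniformizer v p"
    and e_integral: "e \<in> pideal v 0"
    and disc_unit: "1 - 4 * e \<in> OFunits v"
    and norm_b_unit: "1 + b + b * b * e \<in> OFunits v"
    and a_in_p: "a \<in> pideal v 1"
    and b_integral: "b \<in> pideal v 0"
    and n_ge_3: "3 \<le> n"
begin

abbreviation qprod :: "'a quat \<Rightarrow> 'a quat \<Rightarrow> 'a quat" (infixl "\<cdot>" 70)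
  where "x \<cdot> y \<equiv> qmul e p x y"

abbreviation \<xi> :: "'a quat" where "\<xi> \<equiv> xab a b"

abbreviation \<O> :: "'a quat set" where "\<O> \<equiv> bass_order v p a b n"

definition r1 :: int where "r1 = int (n div 2)"

definition r3 :: int where "r3 = int ((n - 1) div 2)"

lemma xab_Q: "\<xi> = Q 0 a 1 b"
  by (simp add: xab_def qx1_def qx2_def qx3_def)

lemma p_nonzero: "p \<noteq> 0" and v_p: "v p = 1"
  using uniformizer by (auto simp: uniformizer_def)

lemma p_in_p: "p \<in> pideal v 1"
  using v_p by (simp add: pideal_def)

lemma a_integral: "a \<in> pideal v 0" and p_integral: "p \<in> pideal v 0"
  using a_in_p p_in_p by (auto elim: pideal_mono)

lemma r_bounds: "1 \<le> r3" "r3 \<le> r1" "r1 \<le> r3 + 1"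
  using n_ge_3 by (auto simp: r1_def r3_def)

lemma pideal_eq_uniformizer_multiples: "z \<in> pideal v (int k) \<longleftrightarrow> (\<exists>c\<in>pideal v 0. z = c * p ^ k)"
proof
  assume "z \<in> pideal v (int k)"
  then have "z / p ^ k \<in> pideal v 0"
    using pideal_divide[of z "int k" "p ^ k"] p_nonzero by (simp add: v_power v_p)
  then show "\<exists>c\<in>pideal v 0. z = c * p ^ k" using p_nonzero by force
next
  assume "\<exists>c\<in>pideal v 0. z = c * p ^ k"
  then show "z \<in> pideal v (int k)"
    using pideal_mult[of _ 0 "p ^ k" "int k"] pideal_power[OF p_in_p, of k] by auto
qed

lemma bass_order_Q_iff:
  "Q y0 y1 y2 y3 \<in> \<O> \<longleftrightarrow>
     y0 \<in> pideal v 0 \<and> y2 \<in> pideal v 0 \<and> y1 - a * y2 \<in> pideal v r1 \<and> y3 - b * y2 \<in> pideal v r3"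
proof -
  have "Q y0 y1 y2 y3 \<in> \<O> \<longleftrightarrow>
      (\<exists>c1 c3. y0 \<in> pideal v 0 \<and> y2 \<in> pideal v 0 \<and> c1 \<in> pideal v 0 \<and> c3 \<in> pideal v 0 \<and>
        y1 - a * y2 = c1 * p ^ (n div 2) \<and> y3 - b * y2 = c3 * p ^ ((n - 1) div 2))"
    unfolding bass_order_def xab_Q OF_eq qone_def qx1_def qx3_def
    by (auto simp: algebra_simps)
  then show ?thesis
    unfolding r1_def r3_def pideal_eq_uniformizer_multiples by blast
qed

lemma bass_orderE:
  assumes "w \<in> \<O>"
  obtains y0 y2 \<rho> \<sigma> where "w = Q y0 (a * y2 + \<rho>) y2 (b * y2 + \<sigma>)"
    and "y0 \<in> pideal v 0" "y2 \<in> pideal v 0" "\<rho> \<in> pideal v r1" "\<sigma> \<in> pideal v r3"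
proof -
  obtain y0 y1 y2 y3 where w: "w = Q y0 y1 y2 y3" by (cases w)
  show thesis
  proof (rule that)
    show "w = Q y0 (a * y2 + (y1 - a * y2)) y2 (b * y2 + (y3 - b * y2))" using w by simp
  qed (use assms w in \<open>simp_all add: bass_order_Q_iff\<close>)
qed

lemma bass_order_paramI:
  "y0 \<in> pideal v 0 \<Longrightarrow> y2 \<in> pideal v 0 \<Longrightarrow> \<rho> \<in> pideal v r1 \<Longrightarrow> \<sigma> \<in> pideal v r3
    \<Longrightarrow> Q y0 (a * y2 + \<rho>) y2 (b * y2 + \<sigma>) \<in> \<O>"
  by (simp add: bass_order_Q_iff)

lemma bass_order_memI:
  "qc0 w \<in> pideal v 0 \<Longrightarrow> qc2 w \<in> pideal v 0 \<Longrightarrow> qc1 w - a * qc2 w \<in> pideal v r1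
    \<Longrightarrow> qc3 w - b * qc2 w \<in> pideal v r3 \<Longrightarrow> w \<in> \<O>"
  by (cases w) (simp add: bass_order_Q_iff)

lemma bass_order_div_p_memI:
  assumes "c0 \<in> pideal v 1" "c2 \<in> pideal v 1"
    and "c1 - a * c2 \<in> pideal v (r1 + 1)" "c3 - b * c2 \<in> pideal v (r3 + 1)"
  shows "qscal (inverse p) (Q c0 c1 c2 c3) \<in> \<O>"
proof -
  have div_p: "z / p \<in> pideal v k" if "z \<in> pideal v (k + 1)" for z k
    using pideal_divide[OF that p_nonzero] by (simp add: v_p)
  show ?thesis
    using div_p[of c0 0] div_p[of c2 0] div_p[of "c1 - a * c2" r1] div_p[of "c3 - b * c2" r3] assms
    by (auto simp: bass_order_Q_iff field_simps diff_divide_distrib)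
qed

lemma offset_levels:
  assumes \<rho>: "\<rho> \<in> pideal v r1" and \<sigma>: "\<sigma> \<in> pideal v r3"
  shows "\<rho> \<in> pideal v r3" "\<rho> \<in> pideal v 1" "\<rho> \<in> pideal v 0"
    "\<sigma> \<in> pideal v 1" "\<sigma> \<in> pideal v 0"
    "p * \<sigma> \<in> pideal v r1" "a * \<sigma> \<in> pideal v r1" "a * \<sigma> \<in> pideal v r3"
proof -
  show "\<rho> \<in> pideal v r3" "\<rho> \<in> pideal v 1" "\<rho> \<in> pideal v 0"
    using pideal_mono[OF \<rho>] r_bounds by simp_all
  show "\<sigma> \<in> pideal v 1" "\<sigma> \<in> pideal v 0"
    using pideal_mono[OF \<sigma>] r_bounds by simp_all
  show "p * \<sigma> \<in> pideal v r1" "a * \<sigma> \<in> pideal v r1" "a * \<sigma> \<in> pideal v r3"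
    using pideal_mult_le[OF p_in_p \<sigma>] pideal_mult_le[OF a_in_p \<sigma>] r_bounds by simp_all
qed

lemma bass_order_add:
  assumes "w \<in> \<O>" "z \<in> \<O>"
  shows "qadd w z \<in> \<O>"
proof -
  obtain y0 y2 \<rho> \<sigma> where w: "w = Q y0 (a * y2 + \<rho>) y2 (b * y2 + \<sigma>)"
    and "y0 \<in> pideal v 0" "y2 \<in> pideal v 0" "\<rho> \<in> pideal v r1" "\<sigma> \<in> pideal v r3"
    using assms(1) by (rule bass_orderE)
  moreover obtain y0' y2' \<rho>' \<sigma>' where z: "z = Q y0' (a * y2' + \<rho>') y2' (b * y2' + \<sigma>')"
    and "y0' \<in> pideal v 0" "y2' \<in> pideal v 0" "\<rho>' \<in> pideal v r1" "\<sigma>' \<in> pideal v r3"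
    using assms(2) by (rule bass_orderE)
  ultimately have "Q (y0 + y0') (a * (y2 + y2') + (\<rho> + \<rho>')) (y2 + y2') (b * (y2 + y2') + (\<sigma> + \<sigma>')) \<in> \<O>"
    by (intro bass_order_paramI pideal_add)
  then show ?thesis unfolding w z by (simp add: algebra_simps)
qed

lemma bass_order_scal:
  assumes "w \<in> \<O>" "c \<in> pideal v 0"
  shows "qscal c w \<in> \<O>"
proof -
  obtain y0 y2 \<rho> \<sigma> where w: "w = Q y0 (a * y2 + \<rho>) y2 (b * y2 + \<sigma>)"
    and "y0 \<in> pideal v 0" "y2 \<in> pideal v 0" "\<rho> \<in> pideal v r1" "\<sigma> \<in> pideal v r3"
    using assms(1) by (rule bass_orderE)
  then have "Q (c * y0) (a * (c * y2) + c * \<rho>) (c * y2) (b * (c * y2) + c * \<sigma>) \<in> \<O>"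
    using assms(2) by (intro bass_order_paramI pideal_mult_integral)
  then show ?thesis unfolding w by (simp add: algebra_simps)
qed

lemma xi_mem: "\<xi> \<in> \<O>"
  by (simp add: xab_Q bass_order_Q_iff a_integral)

text \<open>The norm of \<open>1 + b x\<^sub>1\<close> from \<open>F(x\<^sub>1)\<close> to \<open>F\<close>.\<close>

definition Nb :: 'a where "Nb = 1 + b + b * b * e"

lemma Nb_unit: "Nb \<in> OFunits v"
  using norm_b_unit by (simp add: Nb_def)

lemma Nb_integral: "Nb \<in> pideal v 0"
  using Nb_unit by (rule OFunits_integral)

definition D :: 'a where "D = a * a * e - p * Nb"

lemma nrd_xi: "nrd e p \<xi> = D"
  by (simp add: xab_Q nrd_Q D_def Nb_def algebra_simps)

lemma D_in_p: "D \<in> pideal v 1"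
proof -
  have "D = (a * e) * a - Nb * p" by (simp add: D_def algebra_simps)
  then show ?thesis
    using a_in_p a_integral e_integral p_in_p Nb_integral by (auto intro!: pideal_intros)
qed

lemma v_uniformizer_times_unit_plus:
  assumes "u \<in> OFunits v" "x \<in> pideal v 2"
  shows "p * u + x \<noteq> 0" "v (p * u + x) = 1"
proof -
  have pu: "p * u \<noteq> 0" "v (p * u) = 1"
    using assms(1) p_nonzero by (auto simp: OFunits_def v_mult v_p)
  have "x = 0 \<or> v (p * u) < v x" using assms(2) pu by (auto simp: pideal_def)
  then show "p * u + x \<noteq> 0" "v (p * u + x) = 1"
    using v_add_dominant[OF pu(1)] pu(2) by auto
qed

lemma D_valuation: "D \<noteq> 0" "v D = 1"
proof -
  have "D = p * (- Nb) + (a * a) * e"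
    by (simp add: D_def algebra_simps)
  moreover have "(a * a) * e \<in> pideal v 2"
    using pideal_1_mult[OF a_in_p a_in_p] e_integral by (simp add: pideal_mult_integral mult.commute)
  ultimately show "D \<noteq> 0" "v D = 1"
    using v_uniformizer_times_unit_plus[OF OFunits_uminus[OF Nb_unit]] by simp_all
qed

lemma xi_mult_mem:
  assumes "w \<in> \<O>"
  shows "\<xi> \<cdot> w \<in> \<O>"
proof -
  obtain y0 y2 \<rho> \<sigma> where w: "w = Q y0 (a * y2 + \<rho>) y2 (b * y2 + \<sigma>)"
    and y: "y0 \<in> pideal v 0" "y2 \<in> pideal v 0" and \<rho>\<sigma>: "\<rho> \<in> pideal v r1" "\<sigma> \<in> pideal v r3"
    using assms by (rule bass_orderE)
  note facts = y \<rho>\<sigma> offset_levels[OF \<rho>\<sigma>] a_integral p_integral b_integral e_integral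
  let ?z = "\<xi> \<cdot> w"
  have eq1: "qc1 ?z - a * qc2 ?z = e * a * (a * \<sigma>) - e * a * b * \<rho> - p * \<sigma>"
    and eq3: "qc3 ?z - b * qc2 ?z = (1 + b * e) * (a * \<sigma>) - (1 + b + b * b * e) * \<rho>"
    unfolding w xab_Q by (simp_all add: qmul_Q algebra_simps)
  show ?thesis
  proof (rule bass_order_memI)
    show "qc0 ?z \<in> pideal v 0" "qc2 ?z \<in> pideal v 0"
      using facts unfolding w xab_Q by (auto simp: qmul_Q intro!: pideal_intros)
    show "qc1 ?z - a * qc2 ?z \<in> pideal v r1"
      unfolding eq1 using facts by (auto intro!: pideal_intros)
    show "qc3 ?z - b * qc2 ?z \<in> pideal v r3"
      unfolding eq3 using facts by (auto intro!: pideal_intros)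
  qed
qed

lemma mult_xi_mem:
  assumes "w \<in> \<O>"
  shows "w \<cdot> \<xi> \<in> \<O>"
proof -
  obtain y0 y2 \<rho> \<sigma> where w: "w = Q y0 (a * y2 + \<rho>) y2 (b * y2 + \<sigma>)"
    and y: "y0 \<in> pideal v 0" "y2 \<in> pideal v 0" and \<rho>\<sigma>: "\<rho> \<in> pideal v r1" "\<sigma> \<in> pideal v r3"
    using assms by (rule bass_orderE)
  note facts = y \<rho>\<sigma> offset_levels[OF \<rho>\<sigma>] a_integral p_integral b_integral e_integral
  let ?z = "w \<cdot> \<xi>"
  have eq1: "qc1 ?z - a * qc2 ?z = p * \<sigma> + a * (1 + b * e) * \<rho> - a * e * (a * \<sigma>)"
    and eq3: "qc3 ?z - b * qc2 ?z = (1 + b + b * b * e) * \<rho> - b * e * (a * \<sigma>)"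
    unfolding w xab_Q by (simp_all add: qmul_Q algebra_simps)
  show ?thesis
  proof (rule bass_order_memI)
    show "qc0 ?z \<in> pideal v 0" "qc2 ?z \<in> pideal v 0"
      using facts unfolding w xab_Q by (auto simp: qmul_Q intro!: pideal_intros)
    show "qc1 ?z - a * qc2 ?z \<in> pideal v r1"
      unfolding eq1 using facts by (auto intro!: pideal_intros)
    show "qc3 ?z - b * qc2 ?z \<in> pideal v r3"
      unfolding eq3 using facts by (auto intro!: pideal_intros)
  qed
qed

lemma xi_sandwich_mem:
  assumes "w \<in> \<O>"
  shows "qscal (inverse p) (\<xi> \<cdot> w \<cdot> \<xi>) \<in> \<O>"
proof -
  obtain y0 y2 \<rho> \<sigma> where w: "w = Q y0 (a * y2 + \<rho>) y2 (b * y2 + \<sigma>)"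
    and y: "y0 \<in> pideal v 0" "y2 \<in> pideal v 0" and \<rho>\<sigma>: "\<rho> \<in> pideal v r1" "\<sigma> \<in> pideal v r3"
    using assms by (rule bass_orderE)
  have D\<rho>: "D * \<rho> \<in> pideal v (r1 + 1)" and D\<sigma>: "D * \<sigma> \<in> pideal v (r3 + 1)"
    using pideal_mult[OF D_in_p \<rho>\<sigma>(1)] pideal_mult[OF D_in_p \<rho>\<sigma>(2)] by (simp_all add: add.commute)
  note facts = y \<rho>\<sigma> offset_levels[OF \<rho>\<sigma>] a_integral p_integral b_integral e_integral
    a_in_p p_in_p D_in_p Nb_integral
  let ?z = "\<xi> \<cdot> w \<cdot> \<xi>"
  have eq0: "qc0 ?z = - (y0 + \<rho> + a * y2) * D"
    and eq2: "qc2 ?z = ((1 + 2 * b * e) * \<sigma> + Nb * y2) * p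
                       + (y0 + (1 - 2 * e) * \<rho> + (1 - e) * a * y2) * a"
    and eq1: "qc1 ?z - a * qc2 ?z = D * \<rho>"
    and eq3: "qc3 ?z - b * qc2 ?z = D * \<sigma>"
    unfolding w xab_Q by (simp_all add: qmul_Q D_def Nb_def algebra_simps)
  have "qscal (inverse p) (Q (qc0 ?z) (qc1 ?z) (qc2 ?z) (qc3 ?z)) \<in> \<O>"
  proof (rule bass_order_div_p_memI)
    show "qc0 ?z \<in> pideal v 1" "qc2 ?z \<in> pideal v 1"
      unfolding eq0 eq2 using facts by (auto intro!: pideal_intros)
  qed (simp_all only: eq1 eq3 D\<rho> D\<sigma>)
  then show ?thesis by (simp only: quat_eta)
qed

text \<open>A pure quaternion in \<open>F x\<^sub>2 + F x\<^sub>3\<close> anticommuting with \<open>\<xi> - a/2\<close>; conjugation by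
  \<open>g0\<close> restricts to the nontrivial automorphism of \<open>M\<close>.\<close>

definition g0 :: "'a quat" where "g0 = Q 0 0 (1 + 2 * b * e) (- (b + 2))"

lemma g0_square: "g0 \<cdot> g0 = qscal (- (p * ((1 - 4 * e) * Nb))) qone"
  by (simp add: g0_def qmul_Q qone_def Nb_def algebra_simps)

lemma nrd_g0: "nrd e p g0 = p * ((1 - 4 * e) * Nb)"
  by (simp add: g0_def nrd_Q Nb_def algebra_simps)

lemma g0_intertwines_conj: "g0 \<cdot> qconj \<xi> = \<xi> \<cdot> g0"
  by (simp add: g0_def xab_Q qmul_Q algebra_simps)

lemma g0_sandwich_mem:
  assumes "w \<in> \<O>"
  shows "qscal (inverse p) (g0 \<cdot> w \<cdot> g0) \<in> \<O>"
proof -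
  obtain y0 y2 \<rho> \<sigma> where w: "w = Q y0 (a * y2 + \<rho>) y2 (b * y2 + \<sigma>)"
    and y: "y0 \<in> pideal v 0" "y2 \<in> pideal v 0" and \<rho>\<sigma>: "\<rho> \<in> pideal v r1" "\<sigma> \<in> pideal v r3"
    using assms by (rule bass_orderE)
  have p\<rho>: "p * \<rho> \<in> pideal v (r1 + 1)" and p\<sigma>: "p * \<sigma> \<in> pideal v (r3 + 1)"
    and pa\<sigma>: "p * (a * \<sigma>) \<in> pideal v (r1 + 1)"
    using pideal_mult[OF p_in_p \<rho>\<sigma>(1)] pideal_mult[OF p_in_p \<rho>\<sigma>(2)]
      pideal_mult_le[OF pideal_1_mult[OF p_in_p a_in_p] \<rho>\<sigma>(2)] r_bounds
    by (simp_all add: add.commute mult.assoc)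
  note facts = y \<rho>\<sigma> offset_levels[OF \<rho>\<sigma>] a_integral p_integral b_integral e_integral
    p_in_p Nb_integral p\<rho> p\<sigma> pa\<sigma>
  let ?z = "g0 \<cdot> w \<cdot> g0"
  have eq0: "qc0 ?z = - (1 - 4 * e) * Nb * (\<rho> + y0 + a * y2) * p"
    and eq2: "qc2 ?z = (1 - 4 * e) * ((1 + 2 * b * e) * \<sigma> + Nb * y2) * p"
    and eq1: "qc1 ?z - a * qc2 ?z = (1 - 4 * e) * Nb * (p * \<rho>) - (1 - 4 * e) * (1 + 2 * b * e) * (p * (a * \<sigma>))"
    and eq3: "qc3 ?z - b * qc2 ?z = - (1 - 4 * e) * Nb * (p * \<sigma>)"
    unfolding w g0_def by (simp_all add: qmul_Q Nb_def algebra_simps)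
  have "qscal (inverse p) (Q (qc0 ?z) (qc1 ?z) (qc2 ?z) (qc3 ?z)) \<in> \<O>"
  proof (rule bass_order_div_p_memI)
    show "qc0 ?z \<in> pideal v 1" "qc2 ?z \<in> pideal v 1"
      unfolding eq0 eq2 using facts by (auto intro!: pideal_intros)
    show "qc1 ?z - a * qc2 ?z \<in> pideal v (r1 + 1)" "qc3 ?z - b * qc2 ?z \<in> pideal v (r3 + 1)"
      unfolding eq1 eq3 using facts by (auto intro!: pideal_intros)
  qed
  then show ?thesis by (simp only: quat_eta)
qed

lemma g0_in_normalizer: "g0 \<in> normalizer e p \<O>"
proof -
  define \<gamma> where "\<gamma> = - (p * ((1 - 4 * e) * Nb))"
  have unit: "(1 - 4 * e) * Nb \<in> OFunits v"
    using OFunits_mult[OF disc_unit Nb_unit] by (simp add: Nb_def)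
  then have \<gamma>0: "\<gamma> \<noteq> 0" using p_nonzero OFunits_nonzero[OF unit] by (simp add: \<gamma>_def)
  define h where "h = qscal (inverse \<gamma>) g0"
  have gh: "g0 \<cdot> h = qone" and hg: "h \<cdot> g0 = qone"
    using \<gamma>0 by (simp_all add: h_def qmul_qscal_left qmul_qscal_right g0_square \<gamma>_def[symmetric])
  have "g0 \<cdot> w \<cdot> h \<in> \<O>" "h \<cdot> w \<cdot> g0 \<in> \<O>" if w: "w \<in> \<O>" for w
  proof -
    have "inverse \<gamma> = - inverse ((1 - 4 * e) * Nb) * inverse p"
      by (simp add: \<gamma>_def inverse_mult_distrib mult.commute)
    then have "g0 \<cdot> w \<cdot> h = qscal (- inverse ((1 - 4 * e) * Nb)) (qscal (inverse p) (g0 \<cdot> w \<cdot> g0))"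
      by (simp add: h_def qmul_qscal_right)
    also have "\<dots> \<in> \<O>"
      using g0_sandwich_mem[OF w] OFunits_integral[OF OFunits_uminus[OF OFunits_inverse[OF unit]]]
      by (rule bass_order_scal)
    finally show "g0 \<cdot> w \<cdot> h \<in> \<O>" .
    then show "h \<cdot> w \<cdot> g0 \<in> \<O>"
      by (simp add: h_def qmul_qscal_left qmul_qscal_right)
  qed
  then show ?thesis using gh hg by (intro normalizerI)
qed

section \<open>The subfield \<open>M = F(\<xi>)\<close>\<close>

definition Melem :: "'a \<Rightarrow> 'a \<Rightarrow> 'a quat" where
  "Melem y0 y1 = qadd (qscal y0 qone) (qscal y1 \<xi>)"

definition Nform :: "'a \<Rightarrow> 'a \<Rightarrow> 'a" where
  "Nform y0 y1 = y0 * y0 + a * y0 * y1 + D * y1 * y1"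

lemma Melem_Q: "Melem y0 y1 = Q y0 (y1 * a) y1 (y1 * b)"
  by (simp add: Melem_def xab_Q qone_def)

lemma nrd_Melem: "nrd e p (Melem y0 y1) = Nform y0 y1"
  by (simp add: Melem_Q Nform_def nrd_Q D_def Nb_def algebra_simps)

lemma qconj_Melem: "qconj (Melem y0 y1) = Melem (y0 + a * y1) (- y1)"
  by (simp add: Melem_Q algebra_simps)

lemma Nform_conj: "Nform (y0 + a * y1) (- y1) = Nform y0 y1"
  by (simp add: Nform_def algebra_simps)

lemma Melem_sandwich:
  "Melem y0 y1 \<cdot> w \<cdot> qconj (Melem y0 y1) =
    qadd (qadd (qscal (y0 * (y0 + a * y1)) w) (qscal (y1 * (y0 + a * y1)) (\<xi> \<cdot> w)))
         (qadd (qscal (- (y0 * y1)) (w \<cdot> \<xi>)) (qscal (- (y1 * y1)) (\<xi> \<cdot> w \<cdot> \<xi>)))"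
  by (cases w) (simp add: Melem_Q xab_Q qmul_Q algebra_simps)

text \<open>Up to a scalar, an element of \<open>M\<^sup>\<times>\<close> is \<open>1 + t\<xi>\<close> with \<open>t\<close> integral, whose norm is a unit,
  or \<open>s + \<xi>\<close> with \<open>s \<in> \<pp>\<close>, whose norm has valuation one.\<close>

lemma Nform_y0_dominant:
  assumes "y0 \<noteq> 0" "y1 \<in> pideal v (v y0)"
  obtains t u where "y1 = t * y0" "t \<in> pideal v 0" "u \<in> OFunits v" "Nform y0 y1 = (y0 * y0) * u"
proof
  define t where "t = y1 / y0"
  show "y1 = t * y0" using assms(1) by (simp add: t_def)
  show t: "t \<in> pideal v 0" using pideal_divide[OF assms(2,1)] by (simp add: t_def)
  have "(1 + (t * a + (t * t) * D)) - 1 \<in> pideal v 1"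
    using t a_in_p D_in_p by (auto intro!: pideal_intros)
  then show "1 + (t * a + (t * t) * D) \<in> OFunits v" using OFunits_cong[OF OFunits_one] by blast
  show "Nform y0 y1 = (y0 * y0) * (1 + (t * a + (t * t) * D))"
    using assms(1) by (simp add: Nform_def t_def field_simps)
qed

lemma Nform_y1_dominant:
  assumes "y1 \<noteq> 0" "y0 \<in> pideal v (v y1 + 1)"
  obtains s d where "y0 = s * y1" "s \<in> pideal v 1" "d \<noteq> 0" "v d = 1" "Nform y0 y1 = (y1 * y1) * d"
proof
  define s where "s = y0 / y1"
  show "y0 = s * y1" using assms(1) by (simp add: s_def)
  show s: "s \<in> pideal v 1" using pideal_divide[OF assms(2,1)] by (simp add: s_def)
  have "(s + a) * s \<in> pideal v 2" using s a_in_p by (intro pideal_1_mult pideal_add)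
  then have "(s + a) * s = 0 \<or> v D < v ((s + a) * s)" using D_valuation by (auto simp: pideal_def)
  then show "D + (s + a) * s \<noteq> 0" "v (D + (s + a) * s) = 1"
    using v_add_dominant[OF D_valuation(1)] D_valuation(2) by auto
  show "Nform y0 y1 = (y1 * y1) * (D + (s + a) * s)"
    using assms(1) by (simp add: Nform_def s_def field_simps)
qed

lemma Nform_divides:
  assumes "(y0, y1) \<noteq> (0, 0)"
  shows "Nform y0 y1 \<noteq> 0"
    and "y0 * (y0 + a * y1) / Nform y0 y1 \<in> pideal v 0"
    and "y1 * (y0 + a * y1) / Nform y0 y1 \<in> pideal v 0"
    and "y0 * y1 / Nform y0 y1 \<in> pideal v 0"
    and "p * (y1 * y1) / Nform y0 y1 \<in> pideal v 0"
proof -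
  let ?N = "Nform y0 y1"
  have "(y0 \<noteq> 0 \<and> y1 \<in> pideal v (v y0)) \<or> (y1 \<noteq> 0 \<and> y0 \<in> pideal v (v y1 + 1))"
    using assms by (auto simp: pideal_def)
  then have "?N \<noteq> 0 \<and> y0 * (y0 + a * y1) / ?N \<in> pideal v 0 \<and> y1 * (y0 + a * y1) / ?N \<in> pideal v 0 \<and>
      y0 * y1 / ?N \<in> pideal v 0 \<and> p * (y1 * y1) / ?N \<in> pideal v 0"
  proof
    assume y0: "y0 \<noteq> 0 \<and> y1 \<in> pideal v (v y0)"
    then obtain t u where y1: "y1 = t * y0" and t: "t \<in> pideal v 0"
      and u: "u \<in> OFunits v" "?N = (y0 * y0) * u" by (metis Nform_y0_dominant)
    have "y0 * (y0 + a * y1) / ?N = (1 + t * a) / u" "y1 * (y0 + a * y1) / ?N = (t + t * t * a) / u"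
      "y0 * y1 / ?N = t / u" "p * (y1 * y1) / ?N = (t * t * p) / u"
      unfolding u(2) using y0 OFunits_nonzero[OF u(1)] by (simp_all add: y1 field_simps)
    moreover have "1 + t * a \<in> pideal v 0" "t + t * t * a \<in> pideal v 0" "t * t * p \<in> pideal v 0"
      using t a_integral p_integral by (auto intro!: pideal_intros)
    ultimately show ?thesis
      using t y0 u by (simp add: pideal_divide_unit OFunits_nonzero)
  next
    assume y1: "y1 \<noteq> 0 \<and> y0 \<in> pideal v (v y1 + 1)"
    then obtain s d where y0: "y0 = s * y1" and s: "s \<in> pideal v 1"
      and d: "d \<noteq> 0" "v d = 1" "?N = (y1 * y1) * d" by (metis Nform_y1_dominant)
    have quot: "X / d \<in> pideal v 0" if "X \<in> pideal v 1" for X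
      using pideal_divide[OF that d(1)] by (simp add: d)
    have "y0 * (y0 + a * y1) / ?N = (s * (s + a)) / d" "y1 * (y0 + a * y1) / ?N = (s + a) / d"
      "y0 * y1 / ?N = s / d" "p * (y1 * y1) / ?N = p / d"
      unfolding d(3) using y1 d(1) by (simp_all add: y0 field_simps)
    moreover have "s * (s + a) \<in> pideal v 1" "s + a \<in> pideal v 1"
      using s a_in_p pideal_mult_integral[OF pideal_mono[OF s] pideal_add[OF s a_in_p]]
      by (auto intro: pideal_add)
    ultimately show ?thesis
      using quot s p_in_p y1 d by simp
  qed
  then show "?N \<noteq> 0" "y0 * (y0 + a * y1) / ?N \<in> pideal v 0" "y1 * (y0 + a * y1) / ?N \<in> pideal v 0"
      "y0 * y1 / ?N \<in> pideal v 0" "p * (y1 * y1) / ?N \<in> pideal v 0"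
    by auto
qed

lemma Melem_sandwich_mem:
  assumes "(y0, y1) \<noteq> (0, 0)" "w \<in> \<O>"
  shows "qscal (inverse (Nform y0 y1)) (Melem y0 y1 \<cdot> w \<cdot> qconj (Melem y0 y1)) \<in> \<O>"
proof -
  let ?N = "Nform y0 y1"
  have N0: "?N \<noteq> 0" using Nform_divides(1)[OF assms(1)] .
  have c1: "inverse ?N * (y0 * (y0 + a * y1)) = y0 * (y0 + a * y1) / ?N"
    and c2: "inverse ?N * (y1 * (y0 + a * y1)) = y1 * (y0 + a * y1) / ?N"
    and c3: "inverse ?N * (- (y0 * y1)) = - (y0 * y1 / ?N)"
    and c4: "inverse ?N * (- (y1 * y1)) = - (p * (y1 * y1) / ?N) * inverse p"
    using p_nonzero by (simp_all add: field_simps)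
  have "qscal (inverse ?N) (Melem y0 y1 \<cdot> w \<cdot> qconj (Melem y0 y1)) =
    qadd (qadd (qscal (y0 * (y0 + a * y1) / ?N) w) (qscal (y1 * (y0 + a * y1) / ?N) (\<xi> \<cdot> w)))
         (qadd (qscal (- (y0 * y1 / ?N)) (w \<cdot> \<xi>))
               (qscal (- (p * (y1 * y1) / ?N)) (qscal (inverse p) (\<xi> \<cdot> w \<cdot> \<xi>))))"
    unfolding Melem_sandwich qscal_qadd qscal_qscal c1 c2 c3 c4 ..
  also have "\<dots> \<in> \<O>"
    using Nform_divides[OF assms(1)] assms(2)
    by (intro bass_order_add bass_order_scal xi_mult_mem mult_xi_mem xi_sandwich_mem) simp_all
  finally show ?thesis .
qed

lemma Melem_in_normalizer:
  assumes "(y0, y1) \<noteq> (0, 0)"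
  shows "Melem y0 y1 \<in> normalizer e p \<O>"
proof -
  let ?m = "Melem y0 y1" and ?N = "Nform y0 y1"
  have N0: "?N \<noteq> 0" using Nform_divides(1)[OF assms] .
  define h where "h = qscal (inverse ?N) (qconj ?m)"
  have mh: "?m \<cdot> h = qone" and hm: "h \<cdot> ?m = qone"
    using N0 by (simp_all add: h_def qmul_qscal_right qmul_qscal_left qmul_qconj_right qmul_qconj_left
        nrd_Melem)
  have conj: "(y0 + a * y1, - y1) \<noteq> (0, 0)" using assms by auto
  have "?m \<cdot> w \<cdot> h \<in> \<O>" if "w \<in> \<O>" for w
    using Melem_sandwich_mem[OF assms that] by (simp add: h_def qmul_qscal_right)
  moreover have "h \<cdot> w \<cdot> ?m \<in> \<O>" if "w \<in> \<O>" for w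
    using Melem_sandwich_mem[OF conj that]
    by (simp add: h_def qmul_qscal_left qmul_qscal_right qconj_Melem Nform_conj)
  ultimately show ?thesis using mh hm by (intro normalizerI)
qed

definition norms :: "'a set" where
  "norms = {Nform c0 c1 | c0 c1. (c0, c1) \<noteq> (0, 0)}"

lemma norms_nonzero: "x \<in> norms \<Longrightarrow> x \<noteq> 0"
  unfolding norms_def using Nform_divides(1) by force

lemma Nform_in_norms: "Nform c0 c1 \<noteq> 0 \<Longrightarrow> Nform c0 c1 \<in> norms"
proof -
  assume "Nform c0 c1 \<noteq> 0"
  then have "(c0, c1) \<noteq> (0, 0)" by (auto simp: Nform_def)
  then show ?thesis unfolding norms_def by blast
qed

lemma norms_mult: "x \<in> norms \<Longrightarrow> y \<in> norms \<Longrightarrow> x * y \<in> norms"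
proof -
  assume x: "x \<in> norms" and y: "y \<in> norms"
  then obtain a1 b1 a2 b2 where "x = Nform a1 b1" "y = Nform a2 b2" unfolding norms_def by blast
  then have eq: "x * y = Nform (a1 * a2 - D * b1 * b2) (a1 * b2 + b1 * a2 + a * b1 * b2)"
    by (simp add: Nform_def algebra_simps)
  have "x * y \<noteq> 0" using norms_nonzero[OF x] norms_nonzero[OF y] by simp
  then show "x * y \<in> norms" unfolding eq by (rule Nform_in_norms)
qed

lemma norms_inverse: "x \<in> norms \<Longrightarrow> inverse x \<in> norms"
proof -
  assume x: "x \<in> norms"
  then obtain c0 c1 where c: "x = Nform c0 c1" unfolding norms_def by blast
  define w0 w1 where "w0 = inverse x * (c0 + a * c1)" and "w1 = inverse x * (- c1)"
  have "Nform w0 w1 = inverse x * inverse x * Nform (c0 + a * c1) (- c1)"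
    by (simp add: w0_def w1_def Nform_def algebra_simps)
  also have "\<dots> = inverse x"
    using Nform_conj[of c0 c1] norms_nonzero[OF x] unfolding c by (simp add: field_simps)
  finally have eq: "inverse x = Nform w0 w1" ..
  have "inverse x \<noteq> 0" using norms_nonzero[OF x] by simp
  then show ?thesis unfolding eq by (rule Nform_in_norms)
qed

lemma norms_divide: "x \<in> norms \<Longrightarrow> y \<in> norms \<Longrightarrow> x / y \<in> norms"
  by (simp add: divide_inverse norms_mult norms_inverse)

lemma subalg_M_xi: "subalg_M \<xi> = {Melem c0 c1 | c0 c1. True}"
  by (simp add: subalg_M_def Melem_def)

lemma coordM_Melem: "coordM \<xi> (Melem c0 c1) = (c0, c1)"
  unfolding coordM_def
proof (rule the_equality)
  show "Melem c0 c1 = qadd (qscal (fst (c0, c1)) qone) (qscal (snd (c0, c1)) \<xi>)"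
    by (simp add: Melem_def)
next
  fix c assume "Melem c0 c1 = qadd (qscal (fst c) qone) (qscal (snd c) \<xi>)"
  then show "c = (c0, c1)" by (cases c) (simp add: Melem_Q xab_Q qone_def)
qed

lemma normM_Melem: "normM e p \<xi> (Melem c0 c1) = Nform c0 c1"
proof -
  have "Melem c0 c1 \<cdot> \<xi> = Melem (- c1 * D) (c0 + a * c1)"
    by (simp add: Melem_Q xab_Q qmul_Q D_def Nb_def algebra_simps)
  then show ?thesis
    by (simp add: normM_def coordM_Melem Nform_def algebra_simps)
qed

lemma units_M_xi: "units_M e p \<xi> = {Melem c0 c1 | c0 c1. (c0, c1) \<noteq> (0, 0)}"
proof (intro equalityI subsetI)
  fix y assume "y \<in> units_M e p \<xi>"
  then obtain c0 c1 z where y: "y = Melem c0 c1" and z: "y \<cdot> z = qone"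
    unfolding units_M_def subalg_M_xi by blast
  have "(c0, c1) \<noteq> (0, 0)"
  proof
    assume "(c0, c1) = (0, 0)"
    then show False using z by (cases z) (simp add: y Melem_Q qmul_Q qone_def)
  qed
  then show "y \<in> {Melem c0 c1 | c0 c1. (c0, c1) \<noteq> (0, 0)}" using y by blast
next
  fix y assume "y \<in> {Melem c0 c1 | c0 c1. (c0, c1) \<noteq> (0, 0)}"
  then obtain c0 c1 where y: "y = Melem c0 c1" and c: "(c0, c1) \<noteq> (0, 0)" by blast
  define N where "N = Nform c0 c1"
  have N0: "N \<noteq> 0" using Nform_divides(1)[OF c] by (simp add: N_def)
  have "qscal (inverse N) (qconj y) = Melem ((c0 + a * c1) / N) (- c1 / N)"
    by (simp add: y qconj_Melem Melem_Q divide_inverse algebra_simps)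
  moreover have "y \<cdot> qscal (inverse N) (qconj y) = qone"
    using N0 by (simp add: y qmul_qscal_right qmul_qconj_right nrd_Melem N_def)
  ultimately show "y \<in> units_M e p \<xi>"
    unfolding units_M_def subalg_M_xi y by auto
qed

lemma normM_image_units_M: "normM e p \<xi> ` units_M e p \<xi> = norms"
proof (intro equalityI subsetI)
  fix z assume "z \<in> normM e p \<xi> ` units_M e p \<xi>"
  then obtain c0 c1 where "z = normM e p \<xi> (Melem c0 c1)" "(c0, c1) \<noteq> (0, 0)"
    unfolding units_M_xi by blast
  then show "z \<in> norms" unfolding norms_def normM_Melem by blast
next
  fix z assume "z \<in> norms"
  then obtain c0 c1 where "z = normM e p \<xi> (Melem c0 c1)" "(c0, c1) \<noteq> (0, 0)"
    unfolding norms_def normM_Melem by blast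
  then show "z \<in> normM e p \<xi> ` units_M e p \<xi>" unfolding units_M_xi by blast
qed

text \<open>\<open>(\<xi> - a/2)\<^sup>2 = \<delta>\<close>, so \<open>M = F(\<surd>\<delta>)\<close>.\<close>

definition \<delta> :: 'a where "\<delta> = a * a / 4 - D"

lemma \<delta>_valuation: "\<delta> \<noteq> 0" "v \<delta> = 1"
proof -
  have "\<delta> = p * Nb + (1 - 4 * e) * (a * a) / 4"
    using OFunits_nonzero[OF four_unit] by (simp add: \<delta>_def D_def field_simps)
  moreover have "(1 - 4 * e) * (a * a) \<in> pideal v 2"
    using pideal_1_mult[OF a_in_p a_in_p] e_integral by (auto intro!: pideal_intros)
  then have "(1 - 4 * e) * (a * a) / 4 \<in> pideal v 2"
    using four_unit by (rule pideal_divide_unit)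
  ultimately show "\<delta> \<noteq> 0" "v \<delta> = 1"
    using v_uniformizer_times_unit_plus[OF Nb_unit] by simp_all
qed

lemma Nform_diagonal: "Nform y0 y1 = (y0 + a * y1 / 2) * (y0 + a * y1 / 2) - \<delta> * (y1 * y1)"
  using OFunits_nonzero[OF two_unit] OFunits_nonzero[OF four_unit]
    OFunits_nonzero[OF OFunits_mult[OF four_unit four_unit]]
  by (simp add: Nform_def \<delta>_def field_simps)

lemma neg_\<delta>_unit_in_norms_iff:
  assumes u: "u \<in> OFunits v"
  shows "- \<delta> * u \<in> norms \<longleftrightarrow> residue_unit_square v u"
proof
  assume "residue_unit_square v u"
  then obtain w where w: "w \<in> OFunits v" "w * w = u" using hensel_sqrt by blast
  have eq: "- \<delta> * u = Nform (- a * w / 2) w"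
    using w(2) OFunits_nonzero[OF two_unit] by (simp add: Nform_diagonal field_simps)
  have "- \<delta> * u \<noteq> 0" using \<delta>_valuation(1) OFunits_nonzero[OF u] by simp
  then show "- \<delta> * u \<in> norms"
    unfolding eq by (rule Nform_in_norms)
next
  assume "- \<delta> * u \<in> norms"
  then obtain c0 c1 where c: "- \<delta> * u = Nform c0 c1" unfolding norms_def by blast
  define X Y where "X = c0 + a * c1 / 2" and "Y = c1"
  have XY: "X * X - \<delta> * (Y * Y) = - \<delta> * u"
    using c Nform_diagonal by (simp add: X_def Y_def)
  have "X * X - \<delta> * (Y * Y) \<noteq> 0" "v (X * X - \<delta> * (Y * Y)) = 1"
    unfolding XY using \<delta>_valuation u by (simp_all add: v_mult OFunits_def)
  note Y = diff_squares_valuation_one(1)[OF \<delta>_valuation this]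
    and X = diff_squares_valuation_one(2)[OF \<delta>_valuation this]
  have "Y * Y - u = X * X / \<delta>"
    using XY \<delta>_valuation(1) by (simp add: field_simps)
  also have "\<dots> \<in> pideal v 1"
    using pideal_divide[OF X \<delta>_valuation(1)] \<delta>_valuation(2) by simp
  finally show "residue_unit_square v u"
    unfolding residue_unit_square_def pid_eq using Y by (auto simp: OFunits_def)
qed

lemma norms_cong_iff:
  assumes u: "u \<in> OFunits v" and X: "X + \<delta> * u \<in> pideal v 2"
  shows "X \<in> norms \<longleftrightarrow> residue_unit_square v u"
proof -
  define u' where "u' = X / (- \<delta>)"
  have X_eq: "X = - \<delta> * u'" using \<delta>_valuation(1) by (simp add: u'_def)
  have "u' - u = (X + \<delta> * u) / (- \<delta>)"
    using \<delta>_valuation(1) by (simp add: u'_def field_simps)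
  also have "\<dots> \<in> pideal v 1"
    using pideal_divide[OF X, of "- \<delta>"] \<delta>_valuation by simp
  finally have cong: "u' - u \<in> pideal v 1" .
  then have "u' \<in> OFunits v" using OFunits_cong[OF u] by blast
  moreover have "residue_unit_square v u' \<longleftrightarrow> residue_unit_square v u"
    using cong cong[unfolded pideal_diff_commute] residue_unit_square_cong by blast
  ultimately show ?thesis
    unfolding X_eq using neg_\<delta>_unit_in_norms_iff by blast
qed

lemma nrd_g0_in_norms_iff: "nrd e p g0 \<in> norms \<longleftrightarrow> residue_unit_square v (- (1 - 4 * e))"
proof (rule norms_cong_iff)
  show "- (1 - 4 * e) \<in> OFunits v" using disc_unit by (rule OFunits_uminus)
  have "nrd e p g0 + \<delta> * (- (1 - 4 * e)) = - ((1 - 4 * e) * (1 - 4 * e) * (a * a) / 4)"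
    using OFunits_nonzero[OF four_unit] by (simp add: nrd_g0 \<delta>_def D_def field_simps)
  also have "\<dots> \<in> pideal v 2"
    using pideal_1_mult[OF a_in_p a_in_p] e_integral four_unit
    by (auto intro!: pideal_divide_unit pideal_intros)
  finally show "nrd e p g0 + \<delta> * (- (1 - 4 * e)) \<in> pideal v 2" .
qed

section \<open>Reduced norms of the normalizer\<close>

lemma centralizer_xi:
  assumes "z \<cdot> \<xi> = \<xi> \<cdot> z"
  shows "z = Melem (qc0 z) (qc2 z)"
proof -
  obtain m0 m1 m2 m3 where z: "z = Q m0 m1 m2 m3" by (cases z)
  from assms have "p * (b * m2 - m3) = 0" and e2: "a * m2 + 2 * a * e * m3 - 2 * b * e * m1 - m1 = 0"
    and e3: "- 2 * a * m2 - a * m3 + b * m1 + 2 * m1 = 0"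
    by (simp_all add: z xab_Q qmul_Q algebra_simps)
  then have m3: "m3 = b * m2" using p_nonzero by simp
  have "(1 + 2 * b * e) * (m1 - a * m2) = 0" "(2 + b) * (m1 - a * m2) = 0"
    using e2 e3 by (simp_all add: m3 algebra_simps)
  moreover have "1 + 2 * b * e \<noteq> 0 \<or> 2 + b \<noteq> 0"
  proof (rule ccontr)
    assume "\<not> ?thesis"
    then have h: "1 + 2 * b * e = 0" and "2 + b = 0" by auto
    then have b: "b = -2" by (simp add: add_eq_0_iff)
    have "1 - 4 * e = 1 + 2 * b * e" by (simp add: b)
    then have "1 - 4 * e = 0" using h by simp
    then show False using OFunits_nonzero[OF disc_unit] by simp
  qed
  ultimately have "m1 = a * m2" by auto
  then show ?thesis by (simp add: z m3 Melem_Q mult.commute)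
qed

lemma normalizer_conj_xi:
  assumes "g \<in> normalizer e p \<O>"
  obtains h where "g \<cdot> h = qone" "h \<cdot> g = qone" "g \<cdot> \<xi> \<cdot> h \<in> \<O>"
  using assms xi_mem unfolding normalizer_def by blast

lemma conj_xi_coordinates:
  assumes y: "y \<in> \<O>" and tr: "trd y = a" and nrd: "nrd e p y = D"
  shows "qc0 y \<in> pideal v 1" "qc2 y \<in> pideal v 0" "qc2 y * qc2 y - 1 \<in> pideal v 1"
proof -
  obtain c0 c2 \<rho> \<sigma> where y_eq: "y = Q c0 (a * c2 + \<rho>) c2 (b * c2 + \<sigma>)"
    and c: "c0 \<in> pideal v 0" "c2 \<in> pideal v 0" and \<rho>\<sigma>: "\<rho> \<in> pideal v r1" "\<sigma> \<in> pideal v r3"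
    using y by (rule bass_orderE)
  note lv = offset_levels[OF \<rho>\<sigma>]
  have tr_eq: "2 * c0 = (1 - c2) * a - \<rho>" using tr by (simp add: y_eq algebra_simps)
  have "2 * c0 \<in> pideal v 1"
    unfolding tr_eq using c a_in_p lv by (auto intro!: pideal_intros)
  then have c0: "c0 \<in> pideal v 1"
    using pideal_divide_unit[OF _ two_unit, of "2 * c0"] OFunits_nonzero[OF two_unit] by simp
  then show "qc0 y \<in> pideal v 1" "qc2 y \<in> pideal v 0" using c by (simp_all add: y_eq)
  have "c0 + c2 * a + \<rho> \<in> pideal v 1" "\<rho> + 2 * c2 * a \<in> pideal v 1"
    using a_in_p c0 c lv by (auto intro!: pideal_intros)
  then have g: "c0 * (c0 + c2 * a + \<rho>) \<in> pideal v 2" "\<rho> * (\<rho> + 2 * c2 * a) \<in> pideal v 2"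
    "a * a \<in> pideal v 2" "p * \<sigma> \<in> pideal v 2"
    using c0 lv a_in_p p_in_p by (simp_all add: pideal_1_mult)
  have "nrd e p y - D + p * (Nb * (c2 * c2 - 1)) =
      c0 * (c0 + c2 * a + \<rho>) + e * (\<rho> * (\<rho> + 2 * c2 * a)) + (e * (c2 * c2 - 1)) * (a * a)
      - (c2 * (1 + 2 * b * e) + e * \<sigma>) * (p * \<sigma>)"
    by (simp add: y_eq nrd_Q D_def Nb_def algebra_simps)
  also have "\<dots> \<in> pideal v (1 + 1)"
    using g c e_integral b_integral lv by (auto intro!: pideal_intros)
  finally have "Nb * (c2 * c2 - 1) \<in> pideal v 1"
    using nrd p_nonzero v_p by (auto intro: pideal_div_uniformizer)
  then show "qc2 y * qc2 y - 1 \<in> pideal v 1"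
    using pideal_unit_mult_iff[OF Nb_unit] by (simp add: y_eq)
qed

lemma four_\<delta>: "\<delta> * 4 = a * a - 4 * D"
  using OFunits_nonzero[OF four_unit] by (simp add: \<delta>_def field_simps)

lemma nrd_diff_xi_cong:
  assumes y: "y \<in> \<O>" and tr: "trd y = a" and nrd: "nrd e p y = D" and c2: "qc2 y + 1 \<in> pideal v 1"
  shows "nrd e p (qdiff y \<xi>) + \<delta> * 4 \<in> pideal v 2"
proof -
  obtain c0 c2 \<rho> \<sigma> where y_eq: "y = Q c0 (a * c2 + \<rho>) c2 (b * c2 + \<sigma>)"
    and "\<rho> \<in> pideal v r1" "\<sigma> \<in> pideal v r3"
    using y by (rule bass_orderE)
  then have lv: "\<rho> \<in> pideal v 1" "\<sigma> \<in> pideal v 1" using offset_levels by blast+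
  have c0: "c0 \<in> pideal v 1" using conj_xi_coordinates[OF y tr nrd] by (simp add: y_eq)
  have "a - c0 \<in> pideal v 1" using a_in_p c0 by (rule pideal_diff)
  then have g: "a * (a - c0) \<in> pideal v 2" "D * (1 + c2) \<in> pideal v 2" "a * \<rho> \<in> pideal v 2"
    "p * \<sigma> \<in> pideal v 2"
    using a_in_p D_in_p c2 lv p_in_p by (simp_all add: y_eq pideal_1_mult add.commute)
  have "nrd e p (qdiff y \<xi>) + \<delta> * 4 =
      a * (a - c0) - 2 * (D * (1 + c2)) - 2 * e * (a * \<rho>) + (1 + 2 * b * e) * (p * \<sigma>) + (nrd e p y - D)"
    unfolding four_\<delta> by (simp add: y_eq xab_Q nrd_Q D_def Nb_def algebra_simps)
  also have "\<dots> \<in> pideal v 2"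
    using g nrd e_integral b_integral by (auto intro!: pideal_intros)
  finally show ?thesis .
qed

lemma nrd_diff_conj_xi_cong:
  assumes y: "y \<in> \<O>" and tr: "trd y = a" and nrd: "nrd e p y = D" and c2: "qc2 y - 1 \<in> pideal v 1"
  shows "nrd e p (qdiff y (qconj \<xi>)) + \<delta> * 4 \<in> pideal v 2"
proof -
  obtain c0 c2 \<rho> \<sigma> where y_eq: "y = Q c0 (a * c2 + \<rho>) c2 (b * c2 + \<sigma>)"
    and "\<rho> \<in> pideal v r1" "\<sigma> \<in> pideal v r3"
    using y by (rule bass_orderE)
  then have lv: "\<rho> \<in> pideal v 1" "\<sigma> \<in> pideal v 1" using offset_levels by blast+
  have c0: "c0 \<in> pideal v 1" using conj_xi_coordinates[OF y tr nrd] by (simp add: y_eq)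
  have "1 - c2 \<in> pideal v 1" using c2 by (simp add: y_eq pideal_diff_commute[of c2])
  then have g: "a * c0 \<in> pideal v 2" "D * (1 - c2) \<in> pideal v 2" "a * \<rho> \<in> pideal v 2"
    "p * \<sigma> \<in> pideal v 2"
    using a_in_p D_in_p c0 lv p_in_p by (simp_all add: pideal_1_mult)
  have "nrd e p (qdiff y (qconj \<xi>)) + \<delta> * 4 =
      a * c0 - 2 * (D * (1 - c2)) + 2 * e * (a * \<rho>) - (1 + 2 * b * e) * (p * \<sigma>) + (nrd e p y - D)
      + a * (a - trd y)"
    unfolding four_\<delta> by (simp add: y_eq xab_Q nrd_Q D_def Nb_def algebra_simps)
  also have "\<dots> \<in> pideal v 2"
    using g nrd tr e_integral b_integral by (auto intro!: pideal_intros)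
  finally show ?thesis .
qed

lemma nrd_in_norms_if_intertwines:
  assumes gh: "g \<cdot> h = qone" and hg: "h \<cdot> g = qone"
    and z: "z \<cdot> (g \<cdot> \<xi> \<cdot> h) = \<xi> \<cdot> z" and Nz: "nrd e p z \<in> norms"
  shows "nrd e p g \<in> norms"
proof -
  define m where "m = z \<cdot> g"
  have "m \<cdot> \<xi> = z \<cdot> (g \<cdot> \<xi> \<cdot> h) \<cdot> g"
    using hg by (simp add: m_def qmul_assoc)
  also have "\<dots> = \<xi> \<cdot> z \<cdot> g" by (simp only: z)
  also have "\<dots> = \<xi> \<cdot> m" by (simp add: m_def qmul_assoc)
  finally have "m = Melem (qc0 m) (qc2 m)" by (rule centralizer_xi)
  then have Nm: "nrd e p m = Nform (qc0 m) (qc2 m)" by (metis nrd_Melem)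
  have Nmz: "nrd e p m = nrd e p z * nrd e p g" by (simp add: m_def nrd_mult)
  then have "nrd e p m \<noteq> 0"
    using norms_nonzero[OF Nz] nrd_nonzero_if_invertible[OF gh] by simp
  then have "nrd e p m \<in> norms" unfolding Nm by (rule Nform_in_norms)
  moreover have "nrd e p g = nrd e p m / nrd e p z" using Nmz norms_nonzero[OF Nz] by simp
  ultimately show ?thesis using Nz by (simp add: norms_divide)
qed

text \<open>Modulo \<open>\<pp>\<close>, \<open>y\<close> is congruent to \<open>\<xi>\<close> or to \<open>conj \<xi>\<close>; accordingly \<open>y - conj \<xi>\<close> or
  \<open>y - \<xi>\<close> has norm \<open>-4\<delta>\<close> modulo \<open>\<pp>\<^sup>2\<close>, and in the second case \<open>g0\<close> turns it into an
  intertwiner from \<open>y\<close> to \<open>\<xi>\<close>.\<close>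

lemma intertwiner_in_norms:
  assumes square: "residue_unit_square v (- (1 - 4 * e))"
    and y: "y \<in> \<O>" and tr: "trd y = trd \<xi>" and nrd: "nrd e p y = nrd e p \<xi>"
  obtains z where "z \<cdot> y = \<xi> \<cdot> z" "nrd e p z \<in> norms"
proof -
  have tr_a: "trd y = a" using tr by (simp add: xab_Q)
  have nrd_D: "nrd e p y = D" using nrd by (simp add: nrd_xi)
  note y_coords = conj_xi_coordinates[OF y tr_a nrd_D]
  have "(qc2 y - 1) * (qc2 y + 1) \<in> pideal v 1" using y_coords(3) by (simp add: algebra_simps)
  moreover have "qc2 y - 1 \<in> pideal v 0" "qc2 y + 1 \<in> pideal v 0"
    using y_coords(2) by (simp_all add: pideal_add pideal_diff)
  ultimately have "qc2 y - 1 \<in> pideal v 1 \<or> qc2 y + 1 \<in> pideal v 1"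
    using pideal_prime by blast
  have four: "residue_unit_square v 4"
    using residue_unit_square_square[OF two_unit] by simp
  from \<open>qc2 y - 1 \<in> pideal v 1 \<or> qc2 y + 1 \<in> pideal v 1\<close> show thesis
  proof
    assume "qc2 y - 1 \<in> pideal v 1"
    then have "nrd e p (qdiff y (qconj \<xi>)) \<in> norms"
      using four norms_cong_iff[OF four_unit nrd_diff_conj_xi_cong[OF y tr_a nrd_D]] by simp
    with intertwine_conj[OF tr nrd] show thesis by (rule that)
  next
    assume "qc2 y + 1 \<in> pideal v 1"
    then have "nrd e p (qdiff y \<xi>) \<in> norms"
      using four norms_cong_iff[OF four_unit nrd_diff_xi_cong[OF y tr_a nrd_D]] by simp
    then have "nrd e p (g0 \<cdot> qdiff y \<xi>) \<in> norms"
      using nrd_g0_in_norms_iff square by (simp add: nrd_mult norms_mult)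
    moreover have "g0 \<cdot> qdiff y \<xi> \<cdot> y = \<xi> \<cdot> (g0 \<cdot> qdiff y \<xi>)"
      using intertwine[OF tr nrd] g0_intertwines_conj by (simp add: qmul_assoc flip: qmul_assoc[of e p g0])
    ultimately show thesis using that by blast
  qed
qed

lemma nrd_normalizer_in_norms:
  assumes square: "residue_unit_square v (- (1 - 4 * e))" and g: "g \<in> normalizer e p \<O>"
  shows "nrd e p g \<in> norms"
proof -
  obtain h where gh: "g \<cdot> h = qone" and hg: "h \<cdot> g = qone" and y: "g \<cdot> \<xi> \<cdot> h \<in> \<O>"
    using g by (rule normalizer_conj_xi)
  moreover have "trd (g \<cdot> \<xi> \<cdot> h) = trd \<xi>" "nrd e p (g \<cdot> \<xi> \<cdot> h) = nrd e p \<xi>"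
    using trd_conj_invariant[OF hg] nrd_conj_invariant[OF gh] by simp_all
  ultimately obtain z where "z \<cdot> (g \<cdot> \<xi> \<cdot> h) = \<xi> \<cdot> z" "nrd e p z \<in> norms"
    using intertwiner_in_norms[OF square] by metis
  then show ?thesis using gh hg by (intro nrd_in_norms_if_intertwines[of g h z])
qed

theorem nrd_normalizer_eq_norms_iff:
  "nrd e p ` normalizer e p \<O> = normM e p \<xi> ` units_M e p \<xi> \<longleftrightarrow>
     residue_unit_square v (- (1 - 4 * e))"
proof
  assume "nrd e p ` normalizer e p \<O> = normM e p \<xi> ` units_M e p \<xi>"
  then have "nrd e p g0 \<in> norms" using g0_in_normalizer normM_image_units_M by blast
  then show "residue_unit_square v (- (1 - 4 * e))" using nrd_g0_in_norms_iff by blast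
next
  assume square: "residue_unit_square v (- (1 - 4 * e))"
  have "norms \<subseteq> nrd e p ` normalizer e p \<O>"
  proof
    fix x assume "x \<in> norms"
    then obtain c0 c1 where "x = nrd e p (Melem c0 c1)" "(c0, c1) \<noteq> (0, 0)"
      unfolding norms_def nrd_Melem by blast
    then show "x \<in> nrd e p ` normalizer e p \<O>" using Melem_in_normalizer by blast
  qed
  then show "nrd e p ` normalizer e p \<O> = normM e p \<xi> ` units_M e p \<xi>"
    unfolding normM_image_units_M using nrd_normalizer_in_norms[OF square] by blast
qed

end

theorem lemma3p6:
  fixes v :: "'a::field \<Rightarrow> int" and p e a b :: 'a and n :: nat
  assumes "nonarch_local_field v"
    and "nondyadic v"
    and "uniformizer v p"
    and "(quat_split e p \<and> e = 0) \<or>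
         (\<not> quat_split e p \<and> e \<in> OFunits v \<and> 1 - 4 * e \<in> OFunits v \<and>
          \<not> (\<exists>u\<in>OFunits v. u * u = 1 - 4 * e))"
    and "3 \<le> n"
    and "a \<in> pid v" and "b \<in> OF v"
    and "quat_split e p \<longrightarrow> 1 + b \<in> OFunits v"
  shows "nrd e p ` normalizer e p (bass_order v p a b n)
           = normM e p (xab a b) ` units_M e p (xab a b)
         \<longleftrightarrow> (quat_split e p \<and> residue_unit_square v (-1)) \<or>
             (\<not> quat_split e p \<and> \<not> residue_unit_square v (-1))"
proof -
  interpret complete_nondyadic_dv v + finite_residue_dv v
    using assms(1,2) by unfold_locales (auto simp: nonarch_local_field_def nondyadic_def)
  have a: "a \<in> pideal v 1" and b: "b \<in> pideal v 0" and e: "e \<in> pideal v 0"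
    and disc: "1 - 4 * e \<in> OFunits v"
    using assms(4,6,7) OFunits_integral by (auto simp: OF_eq pid_eq)
  have "1 + b + b * b * e \<in> OFunits v"
    using assms(4,8) unramified_norm_form_unit[OF e b disc] by auto
  then interpret bass_order_setting v p e a b n
    using assms(3,5) a b e disc by unfold_locales
  have "\<not> quat_split e p \<Longrightarrow> \<not> residue_unit_square v (1 - 4 * e)"
    using assms(4) hensel_sqrt by blast
  then show ?thesis
    using nrd_normalizer_eq_norms_iff assms(4)
      residue_square_mult_nonsquare_iff[OF disc _ OFunits_uminus[OF OFunits_one]]
    by (cases "quat_split e p") auto
qed

end
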